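(* Assume (A1), (A2). For every $\varphi\in C([0,T];\mathbb{R}^n)$, $I(\varphi)=\tilde I(\varphi)$, where $$I(\varphi):=\inf_{\mathbf P\in\Xi_\varphi}\frac12\int_0^T\int_{\mathbb{R}^d\times\mathcal Y}|h|^2\,\mathbf P_t(dh\,dy)\,dt,\qquad \tilde I(\varphi):=\inf_{z\in\tilde\Xi_\varphi}\frac12\int_0^T\int_{\mathcal Y}|z_t(y)|^2\,\nu(dy)\,dt$$ (infimum over the empty set $=+\infty$), with $\Xi_\varphi$ the set of measurable $\mathbf P:[0,T]\to\mathcal P(\mathbb{R}^d\times\mathcal Y)$ such that $\mathbf P_t(A_1\times A_2)=\int_{A_2}\eta(A_1|y,t)\nu(dy)$ for a stochastic kernel $\eta$, $\int_0^T\int(|h|^2+|y|^2)\mathbf P_t(dh\,dy)dt<\infty$, and $\varphi_t=x+\int_0^t\int\Phi(\varphi_s,\mathscr L_{\bar X_s},y,\nu,h)\mathbf P_s(dh\,dy)ds$ for all $t$; and $\tilde\Xi_\varphi$ the set of measurable $z:[0,T]\times\mathcal Y\to\mathbb{R}^d$ with $\int_0^T\int_{\mathcal Y}(|z_t(y)|^2+|y|^2)\nu(dy)dt<\infty$ and $\varphi_t=x+\int_0^t\int_{\mathcal Y}\Phi(\varphi_s,\mathscr L_{\bar X_s},y,\nu,z_s(y))\nu(dy)ds$ for all $t$.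
   Context: Fix $T>0$, integers $n,m,d_1,d_2\ge1$, $d=d_1+d_2$, $\mathcal Y:=\mathbb{R}^m$, $x\in\mathbb{R}^n$. $P_1:\mathbb{R}^d\to\mathbb{R}^{d_1}$ is the coordinate projection. $\mathcal P_2(\mathbb{R}^k)$, $\mathbb W_2$ as usual. Coefficients $b:\mathbb{R}^n\times\mathcal P_2(\mathbb{R}^n)\times\mathbb{R}^m\times\mathcal P_2(\mathbb{R}^m)\to\mathbb{R}^n$, $\sigma$ with the same domain and values in $\mathbb{R}^{n\times d_1}$, $f:\mathbb{R}^m\to\mathbb{R}^m$, $g:\mathbb{R}^m\to\mathbb{R}^{m\times d_2}$. (A1): there are $C,\kappa>0$ such that $|b(x_1,\mu_1,y_1,\nu_1)-b(x_2,\mu_2,y_2,\nu_2)|+\|\sigma(x_1,\mu_1,y_1,\nu_1)-\sigma(x_2,\mu_2,y_2,\nu_2)\|\le C(|x_1-x_2|+|y_1-y_2|+\mathbb W_2(\mu_1,\mu_2)+\mathbb W_2(\nu_1,\nu_2))$, $|f(y_1)-f(y_2)|+\|g(y_1)-g(y_2)\|\le C|y_1-y_2|$, $2\langle f(y_1)-f(y_2),y_1-y_2\rangle+3\|g(y_1)-g(y_2)\|^2\le-\kappa|y_1-y_2|^2$. (A2): $g$ bounded, $c_1|\xi|^2\le\langle\sigma\sigma^*(x,\mu,y,\nu)\xi,\xi\rangle\le c_2|\xi|^2$ for some $c_1,c_2>0$. $\nu$ is the unique invariant probability measure of $dY_t=f(Y_t)dt+g(Y_t)d\tilde W_t$ ($\tilde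 W$ a $d_2$-dim Brownian motion). $\bar b(x,\mu):=\int b(x,\mu,y,\nu)\nu(dy)$; $\bar X$ solves $\dot{\bar X}_t=\bar b(\bar X_t,\mathscr L_{\bar X_t})$, $\bar X_0=x$, with $\mathscr L_{\bar X_t}=\delta_{\bar X_t}$. $\Phi(x,\mu,y,\nu',h):=\bar b(x,\mu)+\sigma(x,\mu,y,\nu')P_1h$. *)

theory Defs
  imports "HOL-Probability.Probability"
begin

definition P2 :: "('a::euclidean_space) measure \<Rightarrow> bool" where
  "P2 \<mu> \<longleftrightarrow> prob_space \<mu> \<and> sets \<mu> = sets borel \<and>
     (\<integral>\<^sup>+ x. ennreal ((norm x)\<^sup>2) \<partial>\<mu>) < \<infinity>"

definition couplings :: "('a::euclidean_space) measure \<Rightarrow> 'a measure \<Rightarrow> ('a \<times> 'a) measure set" where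
  "couplings \<mu>1 \<mu>2 = {\<pi>. prob_space \<pi> \<and> sets \<pi> = sets (borel \<Otimes>\<^sub>M borel) \<and>
      distr \<pi> borel fst = \<mu>1 \<and> distr \<pi> borel snd = \<mu>2}"

definition W2 :: "('a::euclidean_space) measure \<Rightarrow> 'a measure \<Rightarrow> real" where
  "W2 \<mu>1 \<mu>2 = sqrt (enn2real (INF \<pi>\<in>couplings \<mu>1 \<mu>2.
      \<integral>\<^sup>+ p. ennreal ((norm (fst p - snd p))\<^sup>2) \<partial>\<pi>))"

definition C2c_test :: "(real^'m \<Rightarrow> real) \<Rightarrow> (real^'m \<Rightarrow> real^'m) \<Rightarrow> (real^'m \<Rightarrow> real^'m^'m) \<Rightarrow> bool" where
  "C2c_test \<phi> D\<phi> H\<phi> \<longleftrightarrow> compact (closure {y. \<phi> y \<noteq> 0}) \<and>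
     (\<forall>y. (\<phi> has_derivative (\<lambda>v. D\<phi> y \<bullet> v)) (at y)) \<and>
     (\<forall>y. (D\<phi> has_derivative (\<lambda>v. H\<phi> y *v v)) (at y)) \<and>
     continuous_on UNIV H\<phi>"

text \<open>Generator of dY = f(Y)dt + g(Y)dW applied to a C^2 function.\<close>
definition generator :: "(real^'m \<Rightarrow> real^'m) \<Rightarrow> (real^'m \<Rightarrow> real^'d2^'m)
    \<Rightarrow> (real^'m \<Rightarrow> real^'m) \<Rightarrow> (real^'m \<Rightarrow> real^'m^'m) \<Rightarrow> real^'m \<Rightarrow> real" where
  "generator f g D\<phi> H\<phi> y = f y \<bullet> D\<phi> y +
     1/2 * (\<Sum>i\<in>UNIV. \<Sum>j\<in>UNIV. (g y ** transpose (g y)) $ i $ j * H\<phi> y $ i $ j)"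

text \<open>Invariant probability measure of the frozen SDE (infinitesimal formulation).\<close>
definition invariant_measure :: "(real^'m \<Rightarrow> real^'m) \<Rightarrow> (real^'m \<Rightarrow> real^'d2^'m)
    \<Rightarrow> (real^'m) measure \<Rightarrow> bool" where
  "invariant_measure f g \<nu> \<longleftrightarrow> prob_space \<nu> \<and> sets \<nu> = sets borel \<and>
     (\<forall>\<phi> D\<phi> H\<phi>. C2c_test \<phi> D\<phi> H\<phi> \<longrightarrow> (LINT y|\<nu>. generator f g D\<phi> H\<phi> y) = 0)"

definition bbar :: "(real^'n \<Rightarrow> (real^'n) measure \<Rightarrow> real^'m \<Rightarrow> (real^'m) measure \<Rightarrow> real^'n)
    \<Rightarrow> (real^'m) measure \<Rightarrow> real^'n \<Rightarrow> (real^'n) measure \<Rightarrow> real^'n" where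
  "bbar b \<nu> x \<mu> = (LINT y|\<nu>. b x \<mu> y \<nu>)"

text \<open>Phi(x,mu,y,nu',h) = bbar(x,mu) + sigma(x,mu,y,nu') P1 h, with R^d = R^d1 x R^d2.\<close>
definition Phi :: "(real^'n \<Rightarrow> (real^'n) measure \<Rightarrow> real^'m \<Rightarrow> (real^'m) measure \<Rightarrow> real^'n)
    \<Rightarrow> (real^'n \<Rightarrow> (real^'n) measure \<Rightarrow> real^'m \<Rightarrow> (real^'m) measure \<Rightarrow> real^'d1^'n)
    \<Rightarrow> (real^'m) measure \<Rightarrow> real^'n \<Rightarrow> (real^'n) measure \<Rightarrow> real^'m \<Rightarrow> (real^'m) measure
    \<Rightarrow> (real^'d1) \<times> (real^'d2) \<Rightarrow> real^'n" where
  "Phi b \<sigma> \<nu> x \<mu> y \<nu>' h = bbar b \<nu> x \<mu> + \<sigma> x \<mu> y \<nu>' *v fst h"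

definition stochastic_kernel :: "real \<Rightarrow> (real^'m \<Rightarrow> real \<Rightarrow> ((real^'d1) \<times> (real^'d2)) measure) \<Rightarrow> bool" where
  "stochastic_kernel T \<eta> \<longleftrightarrow>
     (\<forall>y t. prob_space (\<eta> y t) \<and> sets (\<eta> y t) = sets borel) \<and>
     (\<forall>A\<in>sets borel. (\<lambda>(y, t). emeasure (\<eta> y t) A)
        \<in> borel_measurable (borel \<Otimes>\<^sub>M restrict_space borel {0..T}))"

definition Xi :: "(real^'n \<Rightarrow> (real^'n) measure \<Rightarrow> real^'m \<Rightarrow> (real^'m) measure \<Rightarrow> real^'n)
    \<Rightarrow> (real^'n \<Rightarrow> (real^'n) measure \<Rightarrow> real^'m \<Rightarrow> (real^'m) measure \<Rightarrow> real^'d1^'n)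
    \<Rightarrow> (real^'m) measure \<Rightarrow> real^'n \<Rightarrow> (real \<Rightarrow> real^'n) \<Rightarrow> real \<Rightarrow> (real \<Rightarrow> real^'n)
    \<Rightarrow> (real \<Rightarrow> (((real^'d1) \<times> (real^'d2)) \<times> (real^'m)) measure) set" where
  "Xi b \<sigma> \<nu> x Xbar T \<phi> = {P.
     (\<forall>t\<in>{0..T}. prob_space (P t) \<and> sets (P t) = sets (borel \<Otimes>\<^sub>M borel)) \<and>
     (\<forall>A\<in>sets (borel \<Otimes>\<^sub>M borel). (\<lambda>t. emeasure (P t) A) \<in> borel_measurable (restrict_space borel {0..T})) \<and>
     (\<exists>\<eta>. stochastic_kernel T \<eta> \<and>
        (\<forall>t\<in>{0..T}. \<forall>A1\<in>sets borel. \<forall>A2\<in>sets borel.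
           emeasure (P t) (A1 \<times> A2) = (\<integral>\<^sup>+ y\<in>A2. emeasure (\<eta> y t) A1 \<partial>\<nu>))) \<and>
     (\<integral>\<^sup>+ t\<in>{0..T}. (\<integral>\<^sup>+ p. ennreal ((norm (fst p))\<^sup>2 + (norm (snd p))\<^sup>2) \<partial>P t) \<partial>lborel) < \<infinity> \<and>
     (\<forall>t\<in>{0..T}. \<phi> t = x + (LINT s:{0..t}|lborel.
         (LINT p|P s. Phi b \<sigma> \<nu> (\<phi> s) (return borel (Xbar s)) (snd p) \<nu> (fst p))))}"

definition I_rate :: "('d2::finite) itself \<Rightarrow> (real^'n \<Rightarrow> (real^'n) measure \<Rightarrow> real^'m \<Rightarrow> (real^'m) measure \<Rightarrow> real^'n)
    \<Rightarrow> (real^'n \<Rightarrow> (real^'n) measure \<Rightarrow> real^'m \<Rightarrow> (real^'m) measure \<Rightarrow> real^'d1^'n)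
    \<Rightarrow> (real^'m) measure \<Rightarrow> real^'n \<Rightarrow> (real \<Rightarrow> real^'n) \<Rightarrow> real \<Rightarrow> (real \<Rightarrow> real^'n) \<Rightarrow> ennreal" where
  "I_rate (d2T::('d2::finite) itself) b \<sigma> \<nu> x Xbar T \<phi> = Inf {ennreal (1/2) *
      (\<integral>\<^sup>+ t\<in>{0..T}. (\<integral>\<^sup>+ p. ennreal ((norm (fst p))\<^sup>2) \<partial>P t) \<partial>lborel) | P.
        P \<in> (Xi b \<sigma> \<nu> x Xbar T \<phi> :: (real \<Rightarrow> (((real^'d1) \<times> (real^'d2)) \<times> (real^'m)) measure) set)}"

definition Xi_tilde :: "(real^'n \<Rightarrow> (real^'n) measure \<Rightarrow> real^'m \<Rightarrow> (real^'m) measure \<Rightarrow> real^'n)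
    \<Rightarrow> (real^'n \<Rightarrow> (real^'n) measure \<Rightarrow> real^'m \<Rightarrow> (real^'m) measure \<Rightarrow> real^'d1^'n)
    \<Rightarrow> (real^'m) measure \<Rightarrow> real^'n \<Rightarrow> (real \<Rightarrow> real^'n) \<Rightarrow> real \<Rightarrow> (real \<Rightarrow> real^'n)
    \<Rightarrow> (real \<Rightarrow> real^'m \<Rightarrow> (real^'d1) \<times> (real^'d2)) set" where
  "Xi_tilde b \<sigma> \<nu> x Xbar T \<phi> = {z.
     (\<lambda>(t, y). z t y) \<in> borel_measurable (restrict_space borel {0..T} \<Otimes>\<^sub>M borel) \<and>
     (\<integral>\<^sup>+ t\<in>{0..T}. (\<integral>\<^sup>+ y. ennreal ((norm (z t y))\<^sup>2 + (norm y)\<^sup>2) \<partial>\<nu>) \<partial>lborel) < \<infinity> \<and>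
     (\<forall>t\<in>{0..T}. \<phi> t = x + (LINT s:{0..t}|lborel.
         (LINT y|\<nu>. Phi b \<sigma> \<nu> (\<phi> s) (return borel (Xbar s)) y \<nu> (z s y))))}"

definition I_tilde :: "('d2::finite) itself \<Rightarrow> (real^'n \<Rightarrow> (real^'n) measure \<Rightarrow> real^'m \<Rightarrow> (real^'m) measure \<Rightarrow> real^'n)
    \<Rightarrow> (real^'n \<Rightarrow> (real^'n) measure \<Rightarrow> real^'m \<Rightarrow> (real^'m) measure \<Rightarrow> real^'d1^'n)
    \<Rightarrow> (real^'m) measure \<Rightarrow> real^'n \<Rightarrow> (real \<Rightarrow> real^'n) \<Rightarrow> real \<Rightarrow> (real \<Rightarrow> real^'n) \<Rightarrow> ennreal" where
  "I_tilde (d2T::('d2::finite) itself) b \<sigma> \<nu> x Xbar T \<phi> = Inf {ennreal (1/2) *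
      (\<integral>\<^sup>+ t\<in>{0..T}. (\<integral>\<^sup>+ y. ennreal ((norm (z t y))\<^sup>2) \<partial>\<nu>) \<partial>lborel) | z.
        z \<in> (Xi_tilde b \<sigma> \<nu> x Xbar T \<phi> :: (real \<Rightarrow> real^'m \<Rightarrow> (real^'d1) \<times> (real^'d2)) set)}"

end

(* A strict control z gives the relaxed control P_t = law of (z_t(y), y) under nu, disintegrated
   by the Dirac kernels at z_t(y); it satisfies the same equation with the same energy, so
   I <= I~.  Conversely, a relaxed control P_t(dh dy) = eta(dh|y,t) nu(dy) can be replaced by its
   barycenter z_t(y) = int h eta(dh|y,t): Phi is affine in h, so the averaged equation is
   unchanged, and by Jensen's inequality the energy does not increase, so I~ <= I.  If nu has no
   finite second moment, both constraint sets are empty and both infima are infinite. *)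

theory Submission
  imports Defs
begin

section \<open>Regularity of the coefficients\<close>

lemma P2_return: "P2 (return borel (a::'a::euclidean_space))"
  unfolding P2_def by (simp add: prob_space_return nn_integral_return)

lemma W2_le_coupling:
  assumes "\<pi> \<in> couplings \<mu>1 \<mu>2" "(\<integral>\<^sup>+ p. ennreal ((norm (fst p - snd p))\<^sup>2) \<partial>\<pi>) \<le> ennreal r" "0 \<le> r"
  shows "W2 \<mu>1 \<mu>2 \<le> sqrt r"
proof -
  have "(INF \<pi>\<in>couplings \<mu>1 \<mu>2. \<integral>\<^sup>+ p. ennreal ((norm (fst p - snd p))\<^sup>2) \<partial>\<pi>) \<le> ennreal r"
    using assms by (meson INF_lower2)
  then show ?thesis
    unfolding W2_def using assms(3) by (metis enn2real_ennreal enn2real_mono ennreal_less_top real_sqrt_le_iff)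
qed

lemma W2_return_le: "W2 (return borel (a::'a::euclidean_space)) (return borel b) \<le> norm (a - b)"
proof -
  have "return (borel \<Otimes>\<^sub>M borel) (a, b) \<in> couplings (return borel a) (return borel b)"
    unfolding couplings_def
    by (auto simp: prob_space_return distr_return[OF measurable_fst] distr_return[OF measurable_snd]
        space_pair_measure)
  moreover have "(\<integral>\<^sup>+ p. ennreal ((norm (fst p - snd p))\<^sup>2) \<partial>return (borel \<Otimes>\<^sub>M borel) (a, b))
      \<le> ennreal ((norm (a - b))\<^sup>2)"
    by (subst nn_integral_return) (auto simp: space_pair_measure)
  ultimately have "W2 (return borel a) (return borel b) \<le> sqrt ((norm (a - b))\<^sup>2)"
    by (rule W2_le_coupling) simp
  then show ?thesis by simp
qed

lemma W2_self:
  assumes "P2 (\<mu>::'a::euclidean_space measure)"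
  shows "W2 \<mu> \<mu> = 0"
proof -
  interpret prob_space \<mu> using assms unfolding P2_def by auto
  have sets_\<mu>: "sets \<mu> = sets borel" using assms unfolding P2_def by auto
  have diag: "(\<lambda>x. (x, x)) \<in> measurable \<mu> (borel \<Otimes>\<^sub>M borel)"
    using sets_\<mu> by (simp add: measurable_Pair cong: measurable_cong_sets)
  have "distr \<mu> (borel \<Otimes>\<^sub>M borel) (\<lambda>x. (x, x)) \<in> couplings \<mu> \<mu>"
    unfolding couplings_def using diag sets_\<mu>
    by (auto simp: prob_space_distr distr_distr comp_def distr_id2)
  moreover have "(\<integral>\<^sup>+ p. ennreal ((norm (fst p - snd p))\<^sup>2) \<partial>distr \<mu> (borel \<Otimes>\<^sub>M borel) (\<lambda>x. (x, x)))
      \<le> ennreal 0"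
    by (subst nn_integral_distr[OF diag]) simp_all
  ultimately have "W2 \<mu> \<mu> \<le> sqrt 0" by (rule W2_le_coupling) simp
  moreover have "W2 \<mu> \<mu> \<ge> 0" unfolding W2_def by simp
  ultimately show ?thesis by simp
qed

lemma continuous_on_Dirac_coefficient:
  fixes \<Psi> :: "'x::real_normed_vector \<Rightarrow> 'a::euclidean_space measure \<Rightarrow> 'y::real_normed_vector
      \<Rightarrow> 'w measure \<Rightarrow> 'v::real_normed_vector"
  assumes lip: "\<And>x1 x2 a1 a2 y1 y2. norm (\<Psi> x1 (return borel a1) y1 \<nu> - \<Psi> x2 (return borel a2) y2 \<nu>)
      \<le> C * (norm (x1 - x2) + norm (y1 - y2) + norm (a1 - a2))"
    and C: "0 \<le> C" and u: "continuous_on S u" and v: "continuous_on S v"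
  shows "continuous_on (S \<times> UNIV) (\<lambda>q. \<Psi> (u (fst q)) (return borel (v (fst q))) (snd q) \<nu>)"
proof -
  let ?F = "\<lambda>(x, a, y). \<Psi> x (return borel a) y \<nu>"
  have "(3 * C)-lipschitz_on UNIV ?F"
  proof (rule lipschitz_onI)
    fix p q :: "'x \<times> 'a \<times> 'y"
    obtain x1 a1 y1 x2 a2 y2 where pq: "p = (x1, a1, y1)" "q = (x2, a2, y2)" by (cases p, cases q) auto
    have "norm (a1 - a2) \<le> norm (a1 - a2, y1 - y2)" "norm (y1 - y2) \<le> norm (a1 - a2, y1 - y2)"
      by (rule norm_fst_le, rule norm_snd_le)
    moreover have "norm (x1 - x2) \<le> dist p q" "norm (a1 - a2, y1 - y2) \<le> dist p q"
      unfolding pq dist_norm by (simp_all add: norm_fst_le[of "x1 - x2" "(a1 - a2, y1 - y2)", simplified]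
          norm_snd_le[of "(a1 - a2, y1 - y2)" "x1 - x2", simplified])
    ultimately have "norm (x1 - x2) \<le> dist p q" "norm (a1 - a2) \<le> dist p q" "norm (y1 - y2) \<le> dist p q"
      by linarith+
    then have "norm (x1 - x2) + norm (y1 - y2) + norm (a1 - a2) \<le> 3 * dist p q" by linarith
    then have "C * (norm (x1 - x2) + norm (y1 - y2) + norm (a1 - a2)) \<le> 3 * C * dist p q"
      using mult_left_mono[OF _ C] by (simp add: mult.assoc mult.left_commute)
    then show "dist (?F p) (?F q) \<le> 3 * C * dist p q"
      using lip[of x1 a1 y1 x2 a2 y2] by (simp add: pq dist_norm)
  qed (use C in simp)
  then have "continuous_on UNIV ?F" by (rule lipschitz_on_continuous_on)
  moreover have "continuous_on (S \<times> UNIV) (\<lambda>q. (u (fst q), v (fst q), snd q))"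
    by (intro continuous_intros continuous_on_compose2[OF u] continuous_on_compose2[OF v]) auto
  ultimately show ?thesis
    using continuous_on_compose2[of UNIV ?F] by fastforce
qed

lemma Dirac_Lipschitz_if_W2_Lipschitz:
  fixes \<Psi> :: "'x::real_normed_vector \<Rightarrow> 'a::euclidean_space measure \<Rightarrow> 'y::real_normed_vector
      \<Rightarrow> 'w::euclidean_space measure \<Rightarrow> 'v::real_normed_vector"
  assumes lip: "\<And>x1 x2 \<mu>1 \<mu>2 y1 y2. P2 \<mu>1 \<Longrightarrow> P2 \<mu>2 \<Longrightarrow>
      norm (\<Psi> x1 \<mu>1 y1 \<nu> - \<Psi> x2 \<mu>2 y2 \<nu>) \<le> C * (norm (x1 - x2) + norm (y1 - y2) + W2 \<mu>1 \<mu>2 + W2 \<nu> \<nu>)"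
    and \<nu>: "P2 \<nu>" and C: "0 \<le> C"
  shows "norm (\<Psi> x1 (return borel a1) y1 \<nu> - \<Psi> x2 (return borel a2) y2 \<nu>)
    \<le> C * (norm (x1 - x2) + norm (y1 - y2) + norm (a1 - a2))"
proof -
  have "norm (\<Psi> x1 (return borel a1) y1 \<nu> - \<Psi> x2 (return borel a2) y2 \<nu>)
      \<le> C * (norm (x1 - x2) + norm (y1 - y2) + W2 (return borel a1) (return borel a2) + W2 \<nu> \<nu>)"
    by (rule lip) (simp_all add: P2_return)
  also have "\<dots> \<le> C * (norm (x1 - x2) + norm (y1 - y2) + norm (a1 - a2))"
    using W2_return_le[of a1 a2] W2_self[OF \<nu>] C by (intro mult_left_mono) simp_all
  finally show ?thesis .
qed

lemma norm_matrix_vector_mult_le: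
  fixes A :: "real^'d^'n"
  assumes bound: "\<And>\<xi>. ((A ** transpose A) *v \<xi>) \<bullet> \<xi> \<le> c * (norm \<xi>)\<^sup>2" and c: "0 \<le> c"
  shows "norm (A *v v) \<le> sqrt c * norm v"
proof -
  define \<xi> where "\<xi> = A *v v"
  have "(norm (transpose A *v \<xi>))\<^sup>2 = \<xi> \<bullet> (A *v (transpose A *v \<xi>))"
    by (simp add: power2_norm_eq_inner dot_lmul_matrix[symmetric])
  also have "\<dots> = ((A ** transpose A) *v \<xi>) \<bullet> \<xi>"
    by (simp add: matrix_vector_mul_assoc[symmetric] inner_commute)
  finally have "(norm (transpose A *v \<xi>))\<^sup>2 \<le> (sqrt c * norm \<xi>)\<^sup>2"
    using bound[of \<xi>] c by (simp add: power_mult_distrib)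
  then have adjoint: "norm (transpose A *v \<xi>) \<le> sqrt c * norm \<xi>"
    using c by (simp add: power2_le_iff_abs_le)
  have "(norm \<xi>)\<^sup>2 = (transpose A *v \<xi>) \<bullet> v"
    by (simp add: \<xi>_def power2_norm_eq_inner inner_commute dot_lmul_matrix[symmetric])
  also have "\<dots> \<le> norm (transpose A *v \<xi>) * norm v"
    by (rule norm_cauchy_schwarz)
  also have "\<dots> \<le> sqrt c * norm \<xi> * norm v"
    using adjoint by (simp add: mult_right_mono)
  finally have "norm \<xi> * norm \<xi> \<le> norm \<xi> * (sqrt c * norm v)"
    by (simp add: power2_eq_square ac_simps)
  then show ?thesis
    unfolding \<xi>_def[symmetric] by (cases "norm \<xi> = 0") (auto simp: c)
qed

section \<open>Integration against kernels\<close>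

lemma le_one_plus_square: "(a::real) \<le> 1 + a\<^sup>2"
  using zero_le_power2[of "a - 1"] zero_le_power2[of a] unfolding power2_diff power_one by linarith

context prob_space
begin

lemma square_norm_integral_le:
  fixes f :: "'a \<Rightarrow> 'b::euclidean_space"
  shows "ennreal ((norm (integral\<^sup>L M f))\<^sup>2) \<le> (\<integral>\<^sup>+x. ennreal ((norm (f x))\<^sup>2) \<partial>M)"
proof (cases "integrable M f \<and> (\<integral>\<^sup>+x. ennreal ((norm (f x))\<^sup>2) \<partial>M) < \<infinity>")
  case False
  then have "\<not> integrable M f \<or> (\<integral>\<^sup>+x. ennreal ((norm (f x))\<^sup>2) \<partial>M) = \<infinity>"
    by (simp add: less_top[symmetric])
  then show ?thesis
  proof
    assume "\<not> integrable M f"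
    then show ?thesis by (simp add: not_integrable_integral_eq)
  qed simp
next
  case True
  have f_int: "integrable M f" and f: "f \<in> borel_measurable M"
    using True by (simp_all add: borel_measurable_integrable)
  have square: "integrable M (\<lambda>x. (norm (f x))\<^sup>2)"
  proof (rule integrableI_bounded)
    show "(\<lambda>x. (norm (f x))\<^sup>2) \<in> borel_measurable M"
      using f by measurable
    show "(\<integral>\<^sup>+x. ennreal (norm ((norm (f x))\<^sup>2)) \<partial>M) < \<infinity>"
      using True by simp
  qed
  have "(norm (integral\<^sup>L M f))\<^sup>2 \<le> (integral\<^sup>L M (\<lambda>x. norm (f x)))\<^sup>2"
    by (intro power_mono integral_norm_bound) auto
  also have "\<dots> \<le> integral\<^sup>L M (\<lambda>x. (norm (f x))\<^sup>2)"
    using variance_eq[OF integrable_norm[OF f_int] square] variance_positive[of "\<lambda>x. norm (f x)"] True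
    by simp
  finally have "ennreal ((norm (integral\<^sup>L M f))\<^sup>2) \<le> ennreal (integral\<^sup>L M (\<lambda>x. (norm (f x))\<^sup>2))"
    by (rule ennreal_leI)
  also have "\<dots> = (\<integral>\<^sup>+x. ennreal ((norm (f x))\<^sup>2) \<partial>M)"
    using square by (subst nn_integral_eq_integral) simp_all
  finally show ?thesis .
qed

lemma integrable_if_square_integrable:
  fixes f :: "'a \<Rightarrow> 'b::{banach, second_countable_topology}"
  assumes f: "f \<in> borel_measurable M" and square: "(\<integral>\<^sup>+x. ennreal ((norm (f x))\<^sup>2) \<partial>M) < \<infinity>"
  shows "integrable M f"
proof (rule integrableI_bounded[OF f])
  have "ennreal (norm (f x)) \<le> 1 + ennreal ((norm (f x))\<^sup>2)" for x
    using ennreal_leI[OF le_one_plus_square[of "norm (f x)"]] by simp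
  then have "(\<integral>\<^sup>+x. ennreal (norm (f x)) \<partial>M) \<le> (\<integral>\<^sup>+x. 1 + ennreal ((norm (f x))\<^sup>2) \<partial>M)"
    by (intro nn_integral_mono)
  also have "\<dots> = (\<integral>\<^sup>+x. 1 \<partial>M) + (\<integral>\<^sup>+x. ennreal ((norm (f x))\<^sup>2) \<partial>M)"
    using f by (intro nn_integral_add) measurable
  also have "\<dots> = 1 + (\<integral>\<^sup>+x. ennreal ((norm (f x))\<^sup>2) \<partial>M)"
    by (simp add: emeasure_space_1)
  also have "\<dots> < \<infinity>"
    using square by (simp add: less_top[symmetric])
  finally show "(\<integral>\<^sup>+x. ennreal (norm (f x)) \<partial>M) < \<infinity>" .
qed

end

context
  fixes M :: "'a measure" and N :: "'a \<Rightarrow> 'b measure" and K :: "'b measure"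
  assumes N: "N \<in> measurable M (subprob_algebra K)"
begin

lemma sets_bind_kernel: "y \<in> space M \<Longrightarrow> sets (N y) = sets K"
  by (rule subprob_measurableD(2)[OF N])

lemma measurable_integral_bind_kernel:
  fixes f :: "'b \<Rightarrow> 'c::{banach, second_countable_topology}"
  assumes "f \<in> borel_measurable K"
  shows "(\<lambda>y. integral\<^sup>L (N y) f) \<in> borel_measurable M"
  by (rule measurable_compose[OF N integral_measurable_subprob_algebra[OF assms]])

lemma nn_integral_bind_finite:
  fixes g :: "'b \<Rightarrow> real"
  assumes g: "g \<in> borel_measurable K" and fin: "(\<integral>\<^sup>+x. ennreal (g x) \<partial>(M \<bind> N)) < \<infinity>"
  shows "AE y in M. (\<integral>\<^sup>+x. ennreal (g x) \<partial>N y) \<noteq> \<infinity>"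
    and "integrable M (\<lambda>y. enn2real (\<integral>\<^sup>+x. ennreal (g x) \<partial>N y))"
    and "enn2real (\<integral>\<^sup>+x. ennreal (g x) \<partial>(M \<bind> N)) = (\<integral>y. enn2real (\<integral>\<^sup>+x. ennreal (g x) \<partial>N y) \<partial>M)"
proof -
  have meas: "(\<lambda>y. \<integral>\<^sup>+x. ennreal (g x) \<partial>N y) \<in> borel_measurable M"
    using g by (intro measurable_compose[OF N nn_integral_measurable_subprob_algebra]) simp
  have bind: "(\<integral>\<^sup>+x. ennreal (g x) \<partial>(M \<bind> N)) = (\<integral>\<^sup>+y. (\<integral>\<^sup>+x. ennreal (g x) \<partial>N y) \<partial>M)"
    using g by (intro nn_integral_bind[OF _ N]) simp
  show ae: "AE y in M. (\<integral>\<^sup>+x. ennreal (g x) \<partial>N y) \<noteq> \<infinity>"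
    using fin meas unfolding bind by (intro nn_integral_PInf_AE) simp_all
  then have eq: "(\<integral>\<^sup>+y. ennreal (enn2real (\<integral>\<^sup>+x. ennreal (g x) \<partial>N y)) \<partial>M)
      = (\<integral>\<^sup>+y. (\<integral>\<^sup>+x. ennreal (g x) \<partial>N y) \<partial>M)"
    by (intro nn_integral_cong_AE) (auto simp: ennreal_enn2real_if)
  show "integrable M (\<lambda>y. enn2real (\<integral>\<^sup>+x. ennreal (g x) \<partial>N y))"
    using meas fin unfolding bind by (intro integrableI_bounded) (simp_all add: eq)
  show "enn2real (\<integral>\<^sup>+x. ennreal (g x) \<partial>(M \<bind> N)) = (\<integral>y. enn2real (\<integral>\<^sup>+x. ennreal (g x) \<partial>N y) \<partial>M)"
    unfolding bind eq[symmetric] using meas by (intro enn2real_nn_integral_eq_integral) auto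
qed

context
  fixes f :: "'b \<Rightarrow> 'c::{banach, second_countable_topology}"
  assumes f: "f \<in> borel_measurable K" and int: "integrable (M \<bind> N) f"
begin

lemma nn_integral_norm_bind_finite: "(\<integral>\<^sup>+y. (\<integral>\<^sup>+x. ennreal (norm (f x)) \<partial>N y) \<partial>M) < \<infinity>"
proof -
  have "(\<integral>\<^sup>+y. (\<integral>\<^sup>+x. ennreal (norm (f x)) \<partial>N y) \<partial>M) = (\<integral>\<^sup>+x. ennreal (norm (f x)) \<partial>(M \<bind> N))"
    using f by (intro nn_integral_bind[OF _ N, symmetric]) simp
  then show ?thesis
    using int by (simp add: integrable_iff_bounded)
qed

lemma AE_integrable_bind: "AE y in M. integrable (N y) f"
proof -
  have "AE y in M. (\<integral>\<^sup>+x. ennreal (norm (f x)) \<partial>N y) \<noteq> \<infinity>"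
    using nn_integral_norm_bind_finite f
    by (intro nn_integral_PInf_AE measurable_compose[OF N nn_integral_measurable_subprob_algebra]) simp_all
  then show ?thesis
    using AE_space
  proof eventually_elim
    case (elim y)
    then have "f \<in> borel_measurable (N y)"
      using f sets_bind_kernel by (simp cong: measurable_cong_sets)
    then show ?case
      using elim by (simp add: integrable_iff_bounded less_top)
  qed
qed

lemma integrable_integral_bind: "integrable M (\<lambda>y. integral\<^sup>L (N y) f)"
proof (rule integrableI_bounded[OF measurable_integral_bind_kernel[OF f]])
  have "ennreal (norm (integral\<^sup>L (N y) f)) \<le> (\<integral>\<^sup>+x. ennreal (norm (f x)) \<partial>N y)" for y
    by (cases "integrable (N y) f") (auto simp: integral_norm_bound_ennreal not_integrable_integral_eq)
  then have "(\<integral>\<^sup>+y. ennreal (norm (integral\<^sup>L (N y) f)) \<partial>M) \<le> (\<integral>\<^sup>+y. (\<integral>\<^sup>+x. ennreal (norm (f x)) \<partial>N y) \<partial>M)"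
    by (intro nn_integral_mono)
  then show "(\<integral>\<^sup>+y. ennreal (norm (integral\<^sup>L (N y) f)) \<partial>M) < \<infinity>"
    using nn_integral_norm_bind_finite by (rule le_less_trans)
qed

end

lemma integral_bind_real:
  fixes f :: "'b \<Rightarrow> real"
  assumes f: "f \<in> borel_measurable K" and int: "integrable (M \<bind> N) f"
  shows "integral\<^sup>L (M \<bind> N) f = (\<integral>y. integral\<^sup>L (N y) f \<partial>M)"
proof -
  let ?p = "\<lambda>y. enn2real (\<integral>\<^sup>+x. ennreal (f x) \<partial>N y)" and ?n = "\<lambda>y. enn2real (\<integral>\<^sup>+x. ennreal (- f x) \<partial>N y)"
  have "(\<integral>\<^sup>+x. ennreal (f x) \<partial>(M \<bind> N)) \<le> (\<integral>\<^sup>+x. ennreal (norm (f x)) \<partial>(M \<bind> N))"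
    "(\<integral>\<^sup>+x. ennreal (- f x) \<partial>(M \<bind> N)) \<le> (\<integral>\<^sup>+x. ennreal (norm (f x)) \<partial>(M \<bind> N))"
    by (intro nn_integral_mono; simp)+
  then have fin: "(\<integral>\<^sup>+x. ennreal (f x) \<partial>(M \<bind> N)) < \<infinity>" "(\<integral>\<^sup>+x. ennreal (- f x) \<partial>(M \<bind> N)) < \<infinity>"
    using int by (auto simp: integrable_iff_bounded dest: le_less_trans)
  have f_neg: "(\<lambda>x. - f x) \<in> borel_measurable K"
    using f by simp
  note p = nn_integral_bind_finite[OF f fin(1)] and n = nn_integral_bind_finite[OF f_neg fin(2)]
  have "integral\<^sup>L (M \<bind> N) f = (\<integral>y. ?p y \<partial>M) - (\<integral>y. ?n y \<partial>M)"
    using real_lebesgue_integral_def[OF int] p(3) n(3) f by simp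
  also have "\<dots> = (\<integral>y. ?p y - ?n y \<partial>M)"
    using p(2) n(2) f by simp
  also have "\<dots> = (\<integral>y. integral\<^sup>L (N y) f \<partial>M)"
  proof (rule integral_cong_AE)
    show "AE y in M. ?p y - ?n y = integral\<^sup>L (N y) f"
      using AE_integrable_bind[OF f int] by eventually_elim (simp add: real_lebesgue_integral_def)
    show "(\<lambda>y. ?p y - ?n y) \<in> borel_measurable M"
      using p(2) n(2) by (intro borel_measurable_diff) (simp_all add: borel_measurable_integrable)
    show "(\<lambda>y. integral\<^sup>L (N y) f) \<in> borel_measurable M"
      by (rule measurable_integral_bind_kernel[OF f])
  qed
  finally show ?thesis .
qed

lemma integral_bind:
  fixes f :: "'b \<Rightarrow> 'c::euclidean_space"
  assumes f: "f \<in> borel_measurable K" and int: "integrable (M \<bind> N) f"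
  shows "integral\<^sup>L (M \<bind> N) f = (\<integral>y. integral\<^sup>L (N y) f \<partial>M)"
proof (rule euclidean_eqI)
  fix i :: 'c assume "i \<in> Basis"
  have inner_i: "bounded_linear (\<lambda>v::'c. v \<bullet> i)"
    by (rule bounded_linear_inner_left)
  have "integral\<^sup>L (M \<bind> N) f \<bullet> i = integral\<^sup>L (M \<bind> N) (\<lambda>x. f x \<bullet> i)"
    by (rule integral_bounded_linear[OF inner_i int, symmetric])
  also have "\<dots> = (\<integral>y. integral\<^sup>L (N y) (\<lambda>x. f x \<bullet> i) \<partial>M)"
    using f by (intro integral_bind_real integrable_bounded_linear[OF inner_i int]) simp
  also have "\<dots> = (\<integral>y. integral\<^sup>L (N y) f \<bullet> i \<partial>M)"
  proof (rule integral_cong_AE)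
    show "AE y in M. integral\<^sup>L (N y) (\<lambda>x. f x \<bullet> i) = integral\<^sup>L (N y) f \<bullet> i"
      using AE_integrable_bind[OF f int] by eventually_elim (rule integral_bounded_linear[OF inner_i])
    show "(\<lambda>y. integral\<^sup>L (N y) (\<lambda>x. f x \<bullet> i)) \<in> borel_measurable M"
      using f by (intro measurable_integral_bind_kernel) simp
    show "(\<lambda>y. integral\<^sup>L (N y) f \<bullet> i) \<in> borel_measurable M"
      by (intro borel_measurable_inner measurable_integral_bind_kernel[OF f]) simp
  qed
  also have "\<dots> = (\<integral>y. integral\<^sup>L (N y) f \<partial>M) \<bullet> i"
    by (rule integral_bounded_linear[OF inner_i integrable_integral_bind[OF f int]])
  finally show "integral\<^sup>L (M \<bind> N) f \<bullet> i = (\<integral>y. integral\<^sup>L (N y) f \<partial>M) \<bullet> i" .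
qed

end

text \<open>\<open>kernel_product \<nu> \<eta>\<close> is the measure \<open>\<eta>(dh|y) \<nu>(dy)\<close> on pairs \<open>(h, y)\<close>.\<close>
definition kernel_product :: "'b measure \<Rightarrow> ('b \<Rightarrow> 'a measure) \<Rightarrow> ('a::topological_space \<times> 'b::topological_space) measure"
  where "kernel_product \<nu> \<eta> = \<nu> \<bind> (\<lambda>y. distr (\<eta> y) (borel \<Otimes>\<^sub>M borel) (\<lambda>h. (h, y)))"

context
  fixes \<nu> :: "'b::topological_space measure" and \<eta> :: "'b \<Rightarrow> 'a::topological_space measure"
  assumes \<eta>: "\<eta> \<in> measurable \<nu> (subprob_algebra borel)" and sets_\<nu>: "sets \<nu> = sets borel"
begin

lemma sets_kernel: "sets (\<eta> y) = sets borel"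
  using subprob_measurableD(2)[OF \<eta>] sets_eq_imp_space_eq[OF sets_\<nu>] by simp

lemma measurable_kernel_graph:
  "(\<lambda>y. distr (\<eta> y) (borel \<Otimes>\<^sub>M borel) (\<lambda>h. (h, y))) \<in> measurable \<nu> (subprob_algebra (borel \<Otimes>\<^sub>M borel))"
proof -
  have "(\<lambda>(y, h). (h, y)) \<in> measurable (\<nu> \<Otimes>\<^sub>M borel) (borel \<Otimes>\<^sub>M (borel :: 'b measure))"
    using measurable_ident_sets[OF sets_\<nu>] by measurable
  from measurable_distr2[OF this \<eta>] show ?thesis by simp
qed

lemma space_\<nu>_not_empty: "space \<nu> \<noteq> {}"
  using sets_eq_imp_space_eq[OF sets_\<nu>] by simp

lemma sets_kernel_product: "sets (kernel_product \<nu> \<eta>) = sets (borel \<Otimes>\<^sub>M borel)"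
  unfolding kernel_product_def by (rule sets_bind[OF _ space_\<nu>_not_empty]) simp

lemma measurable_kernel_section: "(\<lambda>h. (h, y)) \<in> measurable (\<eta> y) (borel \<Otimes>\<^sub>M borel)"
  using sets_kernel by (simp cong: measurable_cong_sets)

lemma nn_integral_kernel_product:
  assumes g: "g \<in> borel_measurable (borel \<Otimes>\<^sub>M borel)"
  shows "(\<integral>\<^sup>+p. g p \<partial>kernel_product \<nu> \<eta>) = (\<integral>\<^sup>+y. (\<integral>\<^sup>+h. g (h, y) \<partial>\<eta> y) \<partial>\<nu>)"
proof -
  have "(\<integral>\<^sup>+p. g p \<partial>kernel_product \<nu> \<eta>)
      = (\<integral>\<^sup>+y. (\<integral>\<^sup>+p. g p \<partial>distr (\<eta> y) (borel \<Otimes>\<^sub>M borel) (\<lambda>h. (h, y))) \<partial>\<nu>)"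
    unfolding kernel_product_def by (rule nn_integral_bind[OF g measurable_kernel_graph])
  also have "\<dots> = (\<integral>\<^sup>+y. (\<integral>\<^sup>+h. g (h, y) \<partial>\<eta> y) \<partial>\<nu>)"
    using g by (intro nn_integral_cong nn_integral_distr[OF measurable_kernel_section]) simp
  finally show ?thesis .
qed

lemma measurable_integral_kernel:
  fixes g :: "'a \<times> 'b \<Rightarrow> 'c::{banach, second_countable_topology}"
  assumes g: "g \<in> borel_measurable (borel \<Otimes>\<^sub>M borel)"
  shows "(\<lambda>y. \<integral>h. g (h, y) \<partial>\<eta> y) \<in> borel_measurable \<nu>"
proof -
  have "(\<lambda>y. \<integral>p. g p \<partial>distr (\<eta> y) (borel \<Otimes>\<^sub>M borel) (\<lambda>h. (h, y))) \<in> borel_measurable \<nu>"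
    by (rule measurable_compose[OF measurable_kernel_graph integral_measurable_subprob_algebra[OF g]])
  then show ?thesis
    by (simp add: integral_distr[OF measurable_kernel_section g])
qed

lemma integral_kernel_product:
  fixes g :: "'a \<times> 'b \<Rightarrow> 'c::euclidean_space"
  assumes g: "g \<in> borel_measurable (borel \<Otimes>\<^sub>M borel)" and int: "integrable (kernel_product \<nu> \<eta>) g"
  shows "(\<integral>p. g p \<partial>kernel_product \<nu> \<eta>) = (\<integral>y. (\<integral>h. g (h, y) \<partial>\<eta> y) \<partial>\<nu>)"
proof -
  have "(\<integral>p. g p \<partial>kernel_product \<nu> \<eta>)
      = (\<integral>y. (\<integral>p. g p \<partial>distr (\<eta> y) (borel \<Otimes>\<^sub>M borel) (\<lambda>h. (h, y))) \<partial>\<nu>)"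
    using int unfolding kernel_product_def
    by (rule integral_bind[OF measurable_kernel_graph g])
  also have "\<dots> = (\<integral>y. (\<integral>h. g (h, y) \<partial>\<eta> y) \<partial>\<nu>)"
    by (intro Bochner_Integration.integral_cong refl integral_distr[OF measurable_kernel_section g])
  finally show ?thesis .
qed

lemma kernel_product_eqI:
  assumes sets_P: "sets P = sets (borel \<Otimes>\<^sub>M borel)" and finite: "emeasure P (space P) \<noteq> \<infinity>"
    and rect: "\<And>A1 A2. A1 \<in> sets borel \<Longrightarrow> A2 \<in> sets borel \<Longrightarrow>
      emeasure P (A1 \<times> A2) = (\<integral>\<^sup>+ y\<in>A2. emeasure (\<eta> y) A1 \<partial>\<nu>)"
  shows "P = kernel_product \<nu> \<eta>"
proof (rule measure_eqI_generator_eq[OF Int_stable_pair_measure_generator[of borel borel]])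
  let ?E = "{a \<times> b |a b. a \<in> sets (borel :: 'a measure) \<and> b \<in> sets (borel :: 'b measure)}"
  show "?E \<subseteq> Pow (space borel \<times> space borel)" by auto
  show "sets P = sigma_sets (space borel \<times> space borel) ?E"
    using sets_P by (simp add: sets_pair_measure)
  show "sets (kernel_product \<nu> \<eta>) = sigma_sets (space borel \<times> space borel) ?E"
    using sets_kernel_product by (simp add: sets_pair_measure)
  show "range (\<lambda>_. UNIV) \<subseteq> ?E"
    by (auto intro!: exI[of _ UNIV])
  show "(\<Union>i::nat. UNIV) = space borel \<times> space borel"
    by simp
  show "emeasure P UNIV \<noteq> \<infinity>"
    using finite sets_eq_imp_space_eq[OF sets_P] by (simp add: space_pair_measure)
next
  fix X assume "X \<in> {a \<times> b |a b. a \<in> sets (borel :: 'a measure) \<and> b \<in> sets (borel :: 'b measure)}"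
  then obtain A1 A2 where X: "X = A1 \<times> A2" and A1: "A1 \<in> sets borel" and A2: "A2 \<in> sets borel"
    by auto
  have X_sets: "A1 \<times> A2 \<in> sets (borel \<Otimes>\<^sub>M borel)"
    using A1 A2 by (rule pair_measureI)
  have "emeasure (kernel_product \<nu> \<eta>) X = (\<integral>\<^sup>+p. indicator (A1 \<times> A2) p \<partial>kernel_product \<nu> \<eta>)"
    using X_sets sets_kernel_product X by simp
  also have "\<dots> = (\<integral>\<^sup>+y. (\<integral>\<^sup>+h. indicator (A1 \<times> A2) (h, y) \<partial>\<eta> y) \<partial>\<nu>)"
    by (rule nn_integral_kernel_product[OF borel_measurable_indicator[OF X_sets]])
  also have "\<dots> = (\<integral>\<^sup>+ y\<in>A2. emeasure (\<eta> y) A1 \<partial>\<nu>)"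
  proof (rule nn_integral_cong)
    fix y
    have "A1 \<in> sets (\<eta> y)"
      using A1 sets_kernel by simp
    then show "(\<integral>\<^sup>+h. indicator (A1 \<times> A2) (h, y) \<partial>\<eta> y) = emeasure (\<eta> y) A1 * indicator A2 y"
      by (simp add: indicator_times nn_integral_multc)
  qed
  finally show "emeasure P X = emeasure (kernel_product \<nu> \<eta>) X"
    using rect[OF A1 A2] X by simp
qed

end

lemma finite_if_le_nn_integral_interval:
  fixes c :: ennreal and a b :: real
  assumes "a < b" and fin: "(\<integral>\<^sup>+ t\<in>{a..b}. F t \<partial>lborel) < \<infinity>" and le: "\<And>t. t \<in> {a..b} \<Longrightarrow> c \<le> F t"
  shows "c < \<infinity>"
proof -
  have "c * ennreal (b - a) = (\<integral>\<^sup>+ t. c * indicator {a..b} t \<partial>lborel)"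
    using \<open>a < b\<close> by (simp add: nn_integral_cmult_indicator)
  also have "\<dots> \<le> (\<integral>\<^sup>+ t\<in>{a..b}. F t \<partial>lborel)"
    using le by (intro nn_integral_mono) (simp split: split_indicator)
  finally have "c * ennreal (b - a) < \<infinity>"
    using fin by (rule le_less_trans)
  then show ?thesis
    using \<open>a < b\<close> by (auto simp: ennreal_mult_less_top top.not_eq_extremum)
qed

lemma nn_integral_snd_if_disintegration:
  fixes P :: "('a::topological_space \<times> 'b::topological_space) measure"
  assumes sets_P: "sets P = sets (borel \<Otimes>\<^sub>M borel)" and sets_\<nu>: "sets \<nu> = sets borel"
    and \<eta>: "\<And>y. prob_space (\<eta> y)" "\<And>y. sets (\<eta> y) = sets borel"
    and rect: "\<And>A1 A2. A1 \<in> sets borel \<Longrightarrow> A2 \<in> sets borel \<Longrightarrow>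
      emeasure P (A1 \<times> A2) = (\<integral>\<^sup>+ y\<in>A2. emeasure (\<eta> y) A1 \<partial>\<nu>)"
    and g: "g \<in> borel_measurable borel"
  shows "(\<integral>\<^sup>+ p. g (snd p) \<partial>P) = (\<integral>\<^sup>+ y. g y \<partial>\<nu>)"
proof -
  have snd: "snd \<in> measurable P borel"
    using sets_P by (simp cong: measurable_cong_sets)
  have "distr P borel snd = \<nu>"
  proof (rule measure_eqI)
    fix A assume "A \<in> sets (distr P borel snd)"
    then have A: "A \<in> sets borel" by simp
    have "snd -` A \<inter> space P = UNIV \<times> A"
      using sets_eq_imp_space_eq[OF sets_P] by (auto simp: space_pair_measure)
    then have "emeasure (distr P borel snd) A = (\<integral>\<^sup>+ y\<in>A. emeasure (\<eta> y) UNIV \<partial>\<nu>)"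
      using A by (simp add: emeasure_distr[OF snd A] rect)
    also have "\<dots> = emeasure \<nu> A"
      using A sets_\<nu> prob_space.emeasure_space_1[OF \<eta>(1)] sets_eq_imp_space_eq[OF \<eta>(2)]
      by simp
    finally show "emeasure (distr P borel snd) A = emeasure \<nu> A" .
  qed (simp add: sets_\<nu>)
  then have "(\<integral>\<^sup>+ y. g y \<partial>\<nu>) = (\<integral>\<^sup>+ y. g y \<partial>distr P borel snd)"
    by simp
  also have "\<dots> = (\<integral>\<^sup>+ p. g (snd p) \<partial>P)"
    using g by (intro nn_integral_distr[OF snd]) simp
  finally show ?thesis ..
qed

lemma measurable_stochastic_kernel:
  fixes \<eta> :: "real^'m \<Rightarrow> real \<Rightarrow> ((real^'d1) \<times> (real^'d2)) measure"
  assumes "stochastic_kernel T \<eta>"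
  shows "(\<lambda>q. \<eta> (snd q) (fst q)) \<in> measurable (restrict_space borel {0..T} \<Otimes>\<^sub>M borel) (subprob_algebra borel)"
proof (rule measurable_subprob_algebra)
  fix q :: "real \<times> (real^'m)"
  show "subprob_space (\<eta> (snd q) (fst q))" "sets (\<eta> (snd q) (fst q)) = sets borel"
    using assms by (simp_all add: stochastic_kernel_def prob_space_imp_subprob_space)
next
  fix A :: "((real^'d1) \<times> (real^'d2)) set" assume A: "A \<in> sets borel"
  have "(\<lambda>q. emeasure (\<eta> (fst q) (snd q)) A) \<in> borel_measurable (borel \<Otimes>\<^sub>M restrict_space borel {0..T})"
    using assms A unfolding stochastic_kernel_def by (simp add: case_prod_beta')
  from measurable_compose[OF measurable_Pair[OF measurable_snd measurable_fst] this]
  show "(\<lambda>q. emeasure (\<eta> (snd q) (fst q)) A) \<in> borel_measurable (restrict_space borel {0..T} \<Otimes>\<^sub>M borel)"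
    by simp
qed

lemma measurable_section_restrict:
  assumes f: "f \<in> measurable (restrict_space borel K \<Otimes>\<^sub>M N) L" and t: "t \<in> K"
  shows "(\<lambda>y. f (t, y)) \<in> measurable N L"
proof -
  have "Pair t \<in> measurable N (restrict_space borel K \<Otimes>\<^sub>M N)"
    using t by (intro measurable_Pair1') (simp add: space_restrict_space)
  from measurable_compose[OF this f] show ?thesis .
qed

lemma set_integral_cong_AE_restrict:
  fixes f g :: "real \<Rightarrow> 'a::{banach, second_countable_topology}"
  assumes "A \<subseteq> K" "A \<in> sets borel" "K \<in> sets borel"
    and f: "f \<in> borel_measurable (restrict_space borel K)" and g: "g \<in> borel_measurable (restrict_space borel K)"
    and ae: "AE x in lborel. x \<in> A \<longrightarrow> f x = g x"
  shows "(LINT x:A|lborel. f x) = (LINT x:A|lborel. g x)"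
proof -
  have "(LINT x:A|lborel. f x) = (LINT x:A|lborel. indicator K x *\<^sub>R f x)"
    "(LINT x:A|lborel. g x) = (LINT x:A|lborel. indicator K x *\<^sub>R g x)"
    using assms(1,2) by (auto intro!: set_lebesgue_integral_cong)
  moreover have "(LINT x:A|lborel. indicator K x *\<^sub>R f x) = (LINT x:A|lborel. indicator K x *\<^sub>R g x)"
  proof (rule set_lebesgue_integral_cong_AE)
    show "(\<lambda>x. indicator K x *\<^sub>R f x) \<in> borel_measurable lborel"
      "(\<lambda>x. indicator K x *\<^sub>R g x) \<in> borel_measurable lborel"
      using f g assms(3) by (simp_all add: borel_measurable_restrict_space_iff)
    show "AE x\<in>A in lborel. indicator K x *\<^sub>R f x = indicator K x *\<^sub>R g x"
      using ae by eventually_elim simp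
  qed (use assms(2) in simp)
  ultimately show ?thesis by simp
qed

definition relaxed_energy :: "real \<Rightarrow> (real \<Rightarrow> ('h::real_normed_vector \<times> 'y) measure) \<Rightarrow> ennreal"
  where "relaxed_energy T P = (\<integral>\<^sup>+ t\<in>{0..T}. (\<integral>\<^sup>+ p. ennreal ((norm (fst p))\<^sup>2) \<partial>P t) \<partial>lborel)"

definition control_energy :: "real \<Rightarrow> 'y measure \<Rightarrow> (real \<Rightarrow> 'y \<Rightarrow> 'h::real_normed_vector) \<Rightarrow> ennreal"
  where "control_energy T \<nu> z = (\<integral>\<^sup>+ t\<in>{0..T}. (\<integral>\<^sup>+ y. ennreal ((norm (z t y))\<^sup>2) \<partial>\<nu>) \<partial>lborel)"

lemma I_rate_eq_INF:
  "I_rate TYPE('d2::finite) b \<sigma> \<nu> x Xbar T \<phi>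
     = (INF P \<in> (Xi b \<sigma> \<nu> x Xbar T \<phi> :: (real \<Rightarrow> (((real^'d1) \<times> (real^'d2)) \<times> (real^'m)) measure) set).
          ennreal (1/2) * relaxed_energy T P)"
  unfolding I_rate_def relaxed_energy_def Setcompr_eq_image ..

lemma I_tilde_eq_INF:
  "I_tilde TYPE('d2::finite) b \<sigma> \<nu> x Xbar T \<phi>
     = (INF z \<in> (Xi_tilde b \<sigma> \<nu> x Xbar T \<phi> :: (real \<Rightarrow> real^'m \<Rightarrow> (real^'d1) \<times> (real^'d2)) set).
          ennreal (1/2) * control_energy T \<nu> z)"
  unfolding I_tilde_def control_energy_def Setcompr_eq_image ..

lemma P2_if_Xi_nonempty:
  assumes \<nu>: "prob_space \<nu>" "sets \<nu> = sets borel" and T: "0 < T"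
    and P: "P \<in> Xi b \<sigma> \<nu> x Xbar T \<phi>"
  shows "P2 \<nu>"
proof -
  note P = P[unfolded Xi_def, THEN CollectD]
  then have P_sets: "\<forall>t\<in>{0..T}. prob_space (P t) \<and> sets (P t) = sets (borel \<Otimes>\<^sub>M borel)"
    and moment: "(\<integral>\<^sup>+ t\<in>{0..T}. (\<integral>\<^sup>+ p. ennreal ((norm (fst p))\<^sup>2 + (norm (snd p))\<^sup>2) \<partial>P t) \<partial>lborel) < \<infinity>"
    by simp_all
  from P obtain \<eta> where kernel: "stochastic_kernel T \<eta>"
    and disintegration: "\<forall>t\<in>{0..T}. \<forall>A1\<in>sets borel. \<forall>A2\<in>sets borel.
      emeasure (P t) (A1 \<times> A2) = (\<integral>\<^sup>+ y\<in>A2. emeasure (\<eta> y t) A1 \<partial>\<nu>)"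
    by blast
  have "(\<integral>\<^sup>+ y. ennreal ((norm y)\<^sup>2) \<partial>\<nu>) < \<infinity>"
  proof (rule finite_if_le_nn_integral_interval[OF T moment])
    fix t :: real assume t: "t \<in> {0..T}"
    have "(\<integral>\<^sup>+ y. ennreal ((norm y)\<^sup>2) \<partial>\<nu>) = (\<integral>\<^sup>+ p. ennreal ((norm (snd p))\<^sup>2) \<partial>P t)"
      using P_sets disintegration kernel t \<nu>(2)
      by (intro nn_integral_snd_if_disintegration[symmetric, where \<eta>="\<lambda>y. \<eta> y t"])
         (simp_all add: stochastic_kernel_def)
    also have "\<dots> \<le> (\<integral>\<^sup>+ p. ennreal ((norm (fst p))\<^sup>2 + (norm (snd p))\<^sup>2) \<partial>P t)"
      by (intro nn_integral_mono) simp
    finally show "(\<integral>\<^sup>+ y. ennreal ((norm y)\<^sup>2) \<partial>\<nu>) \<le> \<dots>" .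
  qed
  with \<nu> show ?thesis
    by (simp add: P2_def)
qed

lemma P2_if_Xi_tilde_nonempty:
  assumes \<nu>: "prob_space \<nu>" "sets \<nu> = sets borel" and T: "0 < T"
    and z: "z \<in> Xi_tilde b \<sigma> \<nu> x Xbar T \<phi>"
  shows "P2 \<nu>"
proof -
  have "(\<integral>\<^sup>+ t\<in>{0..T}. (\<integral>\<^sup>+ y. ennreal ((norm (z t y))\<^sup>2 + (norm y)\<^sup>2) \<partial>\<nu>) \<partial>lborel) < \<infinity>"
    using z by (simp add: Xi_tilde_def)
  then have "(\<integral>\<^sup>+ y. ennreal ((norm y)\<^sup>2) \<partial>\<nu>) < \<infinity>"
    by (rule finite_if_le_nn_integral_interval[OF T]) (intro nn_integral_mono, simp)
  with \<nu> show ?thesis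
    by (simp add: P2_def)
qed

section \<open>The averaged equation along a fixed path\<close>

locale rate_function_setting =
  fixes T :: real
    and b :: "real^'n \<Rightarrow> (real^'n) measure \<Rightarrow> real^'m \<Rightarrow> (real^'m) measure \<Rightarrow> real^'n"
    and \<sigma> :: "real^'n \<Rightarrow> (real^'n) measure \<Rightarrow> real^'m \<Rightarrow> (real^'m) measure \<Rightarrow> real^'d1^'n"
    and \<nu> :: "(real^'m) measure" and Xbar :: "real \<Rightarrow> real^'n" and \<phi> :: "real \<Rightarrow> real^'n"
    and c :: real
  assumes T_pos: "0 < T"
    and prob_\<nu>: "prob_space \<nu>" and sets_\<nu>: "sets \<nu> = sets borel"
    and b_cont: "continuous_on ({0..T} \<times> UNIV) (\<lambda>q. b (\<phi> (fst q)) (return borel (Xbar (fst q))) (snd q) \<nu>)"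
    and \<sigma>_cont: "continuous_on ({0..T} \<times> UNIV) (\<lambda>q. \<sigma> (\<phi> (fst q)) (return borel (Xbar (fst q))) (snd q) \<nu>)"
    and \<sigma>_bound: "\<And>s y v. s \<in> {0..T} \<Longrightarrow> norm (\<sigma> (\<phi> s) (return borel (Xbar s)) y \<nu> *v v) \<le> c * norm v"
begin

abbreviation "K \<equiv> {0..T}"

text \<open>Freezing the time variable outside \<open>[0, T]\<close> makes the coefficients continuous, hence Borel,
  on all of \<open>\<real> \<times> \<real>\<^sup>m\<close>.\<close>
definition "time_clamp s = max 0 (min T s)"
definition "B s y = b (\<phi> (time_clamp s)) (return borel (Xbar (time_clamp s))) y \<nu>"
definition "\<Sigma> s y = \<sigma> (\<phi> (time_clamp s)) (return borel (Xbar (time_clamp s))) y \<nu>"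
definition "Bbar s = (LINT y|\<nu>. B s y)"
definition "drift s y (h :: (real^'d1) \<times> (real^'d2)) = Bbar s + \<Sigma> s y *v fst h"

lemma time_clamp_in_K: "time_clamp s \<in> K"
  using T_pos by (auto simp: time_clamp_def)

lemma time_clamp_id: "s \<in> K \<Longrightarrow> time_clamp s = s"
  by (auto simp: time_clamp_def)

lemma Phi_eq_drift: "s \<in> K \<Longrightarrow> Phi b \<sigma> \<nu> (\<phi> s) (return borel (Xbar s)) y \<nu> h = drift s y h"
  by (simp add: Phi_def bbar_def drift_def Bbar_def B_def \<Sigma>_def time_clamp_id)

lemma norm_\<Sigma>_le: "norm (\<Sigma> s y *v v) \<le> c * norm v"
  unfolding \<Sigma>_def by (rule \<sigma>_bound[OF time_clamp_in_K])

lemma continuous_on_clamped: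
  assumes "continuous_on (K \<times> UNIV) F"
  shows "continuous_on UNIV (\<lambda>q. F (time_clamp (fst q), snd q))"
proof (rule continuous_on_compose2[OF assms])
  show "continuous_on UNIV (\<lambda>q::real \<times> 'a. (time_clamp (fst q), snd q))"
    unfolding time_clamp_def by (intro continuous_intros)
qed (use time_clamp_in_K in auto)

lemma measurable_B[measurable]: "(\<lambda>q. B (fst q) (snd q)) \<in> borel_measurable (borel \<Otimes>\<^sub>M borel)"
  using continuous_on_clamped[OF b_cont] unfolding borel_prod B_def
  by (simp add: borel_measurable_continuous_onI)

lemma measurable_\<Sigma>[measurable]: "(\<lambda>q. \<Sigma> (fst q) (snd q)) \<in> borel_measurable (borel \<Otimes>\<^sub>M borel)"
  using continuous_on_clamped[OF \<sigma>_cont] unfolding borel_prod \<Sigma>_def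
  by (simp add: borel_measurable_continuous_onI)

lemma measurable_Bbar[measurable]: "Bbar \<in> borel_measurable borel"
proof -
  interpret \<nu>: prob_space \<nu> by (rule prob_\<nu>)
  have "(\<lambda>q. B (fst q) (snd q)) \<in> borel_measurable (borel \<Otimes>\<^sub>M \<nu>)"
    using sets_\<nu> by (simp cong: measurable_cong_sets)
  then show ?thesis
    unfolding Bbar_def by (intro \<nu>.borel_measurable_lebesgue_integral) (simp add: case_prod_beta')
qed

lemma measurable_drift:
  assumes [measurable]: "s \<in> borel_measurable M" "y \<in> borel_measurable M" "h \<in> borel_measurable M"
  shows "(\<lambda>x. drift (s x) (y x) (h x)) \<in> borel_measurable M"
proof -
  have "(\<lambda>x. \<Sigma> (s x) (y x)) \<in> borel_measurable M"
    using measurable_compose[OF measurable_Pair[OF assms(1,2)] measurable_\<Sigma>] by simp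
  moreover have "(\<lambda>x. fst (h x)) \<in> borel_measurable M"
    by (rule measurable_compose[OF assms(3)]) (intro borel_measurable_continuous_onI continuous_intros)
  ultimately have "(\<lambda>x. \<Sigma> (s x) (y x) *v fst (h x)) \<in> borel_measurable M"
    by (rule borel_measurable_continuous_Pair)
       (unfold matrix_vector_mult_def, intro continuous_intros)
  then show ?thesis
    unfolding drift_def by measurable
qed

lemma norm_drift_le: "norm (drift s y h) \<le> norm (Bbar s) + \<bar>c\<bar> * norm h"
proof -
  have "norm (\<Sigma> s y *v fst h) \<le> c * norm (fst h)"
    by (rule norm_\<Sigma>_le)
  also have "\<dots> \<le> \<bar>c\<bar> * norm h"
    using norm_fst_le[of "fst h" "snd h"] by (intro mult_mono abs_ge_self) simp_all
  finally show ?thesis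
    unfolding drift_def using norm_triangle_ineq[of "Bbar s" "\<Sigma> s y *v fst h"] by linarith
qed

lemma measurable_drift_pair: "(\<lambda>p. drift s (snd p) (fst p)) \<in> borel_measurable (borel \<Otimes>\<^sub>M borel)"
  by (intro measurable_drift; measurable)

lemma measurable_Phi_section:
  assumes "s \<in> K"
  shows "(\<lambda>p::((real^'d1) \<times> (real^'d2)) \<times> (real^'m). Phi b \<sigma> \<nu> (\<phi> s) (return borel (Xbar s)) (snd p) \<nu> (fst p))
    \<in> borel_measurable (borel \<Otimes>\<^sub>M borel)"
  unfolding Phi_eq_drift[OF assms] by (rule measurable_drift_pair)

definition lifted_control :: "(real \<Rightarrow> real^'m \<Rightarrow> (real^'d1) \<times> (real^'d2))
    \<Rightarrow> real \<Rightarrow> (((real^'d1) \<times> (real^'d2)) \<times> (real^'m)) measure"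
  where "lifted_control z t = distr \<nu> (borel \<Otimes>\<^sub>M borel) (\<lambda>y. (z t y, y))"

context
  fixes z :: "real \<Rightarrow> real^'m \<Rightarrow> (real^'d1) \<times> (real^'d2)"
  assumes z: "(\<lambda>(t, y). z t y) \<in> borel_measurable (restrict_space borel K \<Otimes>\<^sub>M borel)"
begin

lemma measurable_control_graph: "(\<lambda>q. (z (fst q) (snd q), snd q)) \<in> measurable (restrict_space borel K \<Otimes>\<^sub>M \<nu>) (borel \<Otimes>\<^sub>M borel)"
  using z sets_\<nu> by (simp add: case_prod_beta' cong: measurable_cong_sets)

lemma measurable_control_section: "t \<in> K \<Longrightarrow> (\<lambda>y. (z t y, y)) \<in> measurable \<nu> (borel \<Otimes>\<^sub>M borel)"
  using measurable_section_restrict[OF measurable_control_graph] by simp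

lemma nn_integral_lifted_control:
  assumes "t \<in> K" and "g \<in> borel_measurable (borel \<Otimes>\<^sub>M borel)"
  shows "(\<integral>\<^sup>+p. g p \<partial>lifted_control z t) = (\<integral>\<^sup>+y. g (z t y, y) \<partial>\<nu>)"
  unfolding lifted_control_def using assms
  by (intro nn_integral_distr[OF measurable_control_section]) simp_all

lemma emeasure_lifted_control:
  assumes "t \<in> K" and "A \<in> sets (borel \<Otimes>\<^sub>M borel)"
  shows "emeasure (lifted_control z t) A = (\<integral>\<^sup>+y. indicator A (z t y, y) \<partial>\<nu>)"
  using nn_integral_lifted_control[OF assms(1) borel_measurable_indicator[OF assms(2)]] assms(2)
  by (simp add: lifted_control_def)

lemma relaxed_energy_lifted_control: "relaxed_energy T (lifted_control z) = control_energy T \<nu> z"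
  unfolding relaxed_energy_def control_energy_def
  by (intro nn_integral_cong) (simp add: nn_integral_lifted_control split: split_indicator)

lemma measurable_emeasure_lifted_control:
  assumes A: "A \<in> sets (borel \<Otimes>\<^sub>M borel)"
  shows "(\<lambda>t. emeasure (lifted_control z t) A) \<in> borel_measurable (restrict_space borel K)"
proof -
  have "(\<lambda>q. indicator A (z (fst q) (snd q), snd q) :: ennreal) \<in> borel_measurable (restrict_space borel K \<Otimes>\<^sub>M \<nu>)"
    by (rule measurable_compose[OF measurable_control_graph borel_measurable_indicator[OF A]])
  then have "(\<lambda>t. \<integral>\<^sup>+y. indicator A (z t y, y) \<partial>\<nu>) \<in> borel_measurable (restrict_space borel K)"
    by (intro sigma_finite_measure.borel_measurable_nn_integral[OF prob_space_imp_sigma_finite[OF prob_\<nu>]])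
       (simp add: case_prod_beta')
  then show ?thesis
    by (rule measurable_cong[THEN iffD1, rotated]) (simp add: emeasure_lifted_control[OF _ A] space_restrict_space)
qed

lemma stochastic_kernel_Dirac: "stochastic_kernel T (\<lambda>y t. return borel (z t y))"
  unfolding stochastic_kernel_def
proof (intro conjI allI ballI)
  fix A :: "((real^'d1) \<times> (real^'d2)) set" assume A: "A \<in> sets borel"
  have "(\<lambda>q. z (snd q) (fst q)) \<in> borel_measurable (borel \<Otimes>\<^sub>M restrict_space borel K)"
    using measurable_compose[OF measurable_Pair[OF measurable_snd measurable_fst] z]
    by (simp add: case_prod_beta')
  from measurable_compose[OF this borel_measurable_indicator[OF A]]
  show "(\<lambda>(y, t). emeasure (return borel (z t y)) A) \<in> borel_measurable (borel \<Otimes>\<^sub>M restrict_space borel K)"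
    using A by (simp add: case_prod_beta')
qed (simp_all add: prob_space_return)

lemma emeasure_lifted_control_times:
  assumes "t \<in> K" "A1 \<in> sets borel" "A2 \<in> sets borel"
  shows "emeasure (lifted_control z t) (A1 \<times> A2) = (\<integral>\<^sup>+ y\<in>A2. emeasure (return borel (z t y)) A1 \<partial>\<nu>)"
  using assms by (simp add: emeasure_lifted_control indicator_times mult.commute)

lemma moment_lifted_control:
  "(\<integral>\<^sup>+ t\<in>K. (\<integral>\<^sup>+ p. ennreal ((norm (fst p))\<^sup>2 + (norm (snd p))\<^sup>2) \<partial>lifted_control z t) \<partial>lborel)
    = (\<integral>\<^sup>+ t\<in>K. (\<integral>\<^sup>+ y. ennreal ((norm (z t y))\<^sup>2 + (norm y)\<^sup>2) \<partial>\<nu>) \<partial>lborel)"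
  by (intro nn_integral_cong) (simp add: nn_integral_lifted_control split: split_indicator)

lemma integral_Phi_lifted_control:
  assumes s: "s \<in> K"
  shows "(LINT p|lifted_control z s. Phi b \<sigma> \<nu> (\<phi> s) (return borel (Xbar s)) (snd p) \<nu> (fst p))
    = (LINT y|\<nu>. Phi b \<sigma> \<nu> (\<phi> s) (return borel (Xbar s)) y \<nu> (z s y))"
  unfolding lifted_control_def
  by (subst integral_distr[OF measurable_control_section[OF s] measurable_Phi_section[OF s]]) simp

lemma lifted_control_in_Xi:
  assumes "z \<in> Xi_tilde b \<sigma> \<nu> x Xbar T \<phi>"
  shows "lifted_control z \<in> Xi b \<sigma> \<nu> x Xbar T \<phi>"
  unfolding Xi_def
proof (intro CollectI conjI ballI)
  fix t assume t: "t \<in> K"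
  show "prob_space (lifted_control z t)"
    unfolding lifted_control_def by (rule prob_space.prob_space_distr[OF prob_\<nu> measurable_control_section[OF t]])
  show "sets (lifted_control z t) = sets (borel \<Otimes>\<^sub>M borel)"
    by (simp add: lifted_control_def)
  have "(LINT s:{0..t}|lborel.
        (LINT p|lifted_control z s. Phi b \<sigma> \<nu> (\<phi> s) (return borel (Xbar s)) (snd p) \<nu> (fst p)))
      = (LINT s:{0..t}|lborel. (LINT y|\<nu>. Phi b \<sigma> \<nu> (\<phi> s) (return borel (Xbar s)) y \<nu> (z s y)))"
    using t by (intro set_lebesgue_integral_cong) (auto simp: integral_Phi_lifted_control)
  then show "\<phi> t = x + (LINT s:{0..t}|lborel.
      (LINT p|lifted_control z s. Phi b \<sigma> \<nu> (\<phi> s) (return borel (Xbar s)) (snd p) \<nu> (fst p)))"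
    using assms t by (simp add: Xi_tilde_def)
next
  show "(\<lambda>t. emeasure (lifted_control z t) A) \<in> borel_measurable (restrict_space borel K)"
    if "A \<in> sets (borel \<Otimes>\<^sub>M borel)" for A
    using that by (rule measurable_emeasure_lifted_control)
  show "\<exists>\<eta>. stochastic_kernel T \<eta> \<and> (\<forall>t\<in>K. \<forall>A1\<in>sets borel. \<forall>A2\<in>sets borel.
      emeasure (lifted_control z t) (A1 \<times> A2) = (\<integral>\<^sup>+ y\<in>A2. emeasure (\<eta> y t) A1 \<partial>\<nu>))"
    using stochastic_kernel_Dirac emeasure_lifted_control_times by blast
  show "(\<integral>\<^sup>+ t\<in>K. (\<integral>\<^sup>+ p. ennreal ((norm (fst p))\<^sup>2 + (norm (snd p))\<^sup>2) \<partial>lifted_control z t) \<partial>lborel) < \<infinity>"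
    using assms unfolding moment_lifted_control by (simp add: Xi_tilde_def)
qed

end

end

section \<open>Barycenters of relaxed controls\<close>

locale relaxed_control = rate_function_setting T b \<sigma> \<nu> Xbar \<phi> c
  for T :: real
    and b :: "real^'n \<Rightarrow> (real^'n) measure \<Rightarrow> real^'m \<Rightarrow> (real^'m) measure \<Rightarrow> real^'n"
    and \<sigma> :: "real^'n \<Rightarrow> (real^'n) measure \<Rightarrow> real^'m \<Rightarrow> (real^'m) measure \<Rightarrow> real^'d1^'n"
    and \<nu> :: "(real^'m) measure" and Xbar :: "real \<Rightarrow> real^'n" and \<phi> :: "real \<Rightarrow> real^'n"
    and c :: real +
  fixes P :: "real \<Rightarrow> (((real^'d1) \<times> (real^'d2)) \<times> (real^'m)) measure"
    and \<eta> :: "real^'m \<Rightarrow> real \<Rightarrow> ((real^'d1) \<times> (real^'d2)) measure"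
  assumes prob_P: "\<And>t. t \<in> {0..T} \<Longrightarrow> prob_space (P t)"
    and sets_P: "\<And>t. t \<in> {0..T} \<Longrightarrow> sets (P t) = sets (borel \<Otimes>\<^sub>M borel)"
    and measurable_P: "\<And>A. A \<in> sets (borel \<Otimes>\<^sub>M borel) \<Longrightarrow>
      (\<lambda>t. emeasure (P t) A) \<in> borel_measurable (restrict_space borel {0..T})"
    and kernel_\<eta>: "stochastic_kernel T \<eta>"
    and disintegration: "\<And>t A1 A2. t \<in> {0..T} \<Longrightarrow> A1 \<in> sets borel \<Longrightarrow> A2 \<in> sets borel \<Longrightarrow>
      emeasure (P t) (A1 \<times> A2) = (\<integral>\<^sup>+ y\<in>A2. emeasure (\<eta> y t) A1 \<partial>\<nu>)"
    and moment_P: "(\<integral>\<^sup>+ t\<in>{0..T}. (\<integral>\<^sup>+ p. ennreal ((norm (fst p))\<^sup>2 + (norm (snd p))\<^sup>2) \<partial>P t) \<partial>lborel) < \<infinity>"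
begin

text \<open>Where \<open>\<eta> y t\<close> has no first moment the Bochner integral is \<open>0\<close>; by \<open>moment_P\<close> this
  happens, for almost every \<open>t\<close>, only on a \<open>\<nu>\<close>-null set of \<open>y\<close>.\<close>
definition "barycenter t y = (LINT h|\<eta> y t. h)"

lemma prob_\<eta>: "prob_space (\<eta> y t)" and sets_\<eta>: "sets (\<eta> y t) = sets borel"
  using kernel_\<eta> by (simp_all add: stochastic_kernel_def)

lemma measurable_\<eta>_section: "t \<in> K \<Longrightarrow> (\<lambda>y. \<eta> y t) \<in> measurable \<nu> (subprob_algebra borel)"
  using measurable_section_restrict[OF measurable_stochastic_kernel[OF kernel_\<eta>]] sets_\<nu>
  by (simp cong: measurable_cong_sets)

lemma P_eq_kernel_product: "t \<in> K \<Longrightarrow> P t = kernel_product \<nu> (\<lambda>y. \<eta> y t)"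
  using prob_space.emeasure_space_1[OF prob_P]
  by (intro kernel_product_eqI measurable_\<eta>_section sets_\<nu> sets_P disintegration) simp_all

lemma nn_integral_P:
  assumes "t \<in> K" and "g \<in> borel_measurable (borel \<Otimes>\<^sub>M borel)"
  shows "(\<integral>\<^sup>+p. g p \<partial>P t) = (\<integral>\<^sup>+y. (\<integral>\<^sup>+h. g (h, y) \<partial>\<eta> y t) \<partial>\<nu>)"
  unfolding P_eq_kernel_product[OF assms(1)]
  by (rule nn_integral_kernel_product[OF measurable_\<eta>_section[OF assms(1)] sets_\<nu> assms(2)])

lemma measurable_barycenter: "(\<lambda>(t, y). barycenter t y) \<in> borel_measurable (restrict_space borel K \<Otimes>\<^sub>M borel)"
proof -
  have "(\<lambda>M. LINT h|M. h) \<in> borel_measurable (subprob_algebra (borel :: ((real^'d1) \<times> (real^'d2)) measure))"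
    by (intro integral_measurable_subprob_algebra) simp
  from measurable_compose[OF measurable_stochastic_kernel[OF kernel_\<eta>] this]
  show ?thesis by (simp add: barycenter_def case_prod_beta')
qed

text \<open>The weight \<open>f\<close> on the fast variable lets one Jensen estimate bound both the energy
  (\<open>f = 0\<close>) and the full second moment.\<close>
lemma nn_integral_barycenter_le:
  assumes t: "t \<in> K" and f: "f \<in> borel_measurable borel" "\<And>y. 0 \<le> f y"
  shows "(\<integral>\<^sup>+y. ennreal ((norm (barycenter t y))\<^sup>2 + f y) \<partial>\<nu>)
    \<le> (\<integral>\<^sup>+p. ennreal ((norm (fst p))\<^sup>2 + f (snd p)) \<partial>P t)"
proof -
  have "ennreal ((norm (barycenter t y))\<^sup>2 + f y) \<le> (\<integral>\<^sup>+h. ennreal ((norm h)\<^sup>2 + f y) \<partial>\<eta> y t)" for y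
  proof -
    interpret \<eta>: prob_space "\<eta> y t" by (rule prob_\<eta>)
    have "ennreal ((norm (barycenter t y))\<^sup>2 + f y) = ennreal ((norm (barycenter t y))\<^sup>2) + ennreal (f y)"
      using f(2) by simp
    also have "\<dots> \<le> (\<integral>\<^sup>+h. ennreal ((norm h)\<^sup>2) \<partial>\<eta> y t) + ennreal (f y)"
      unfolding barycenter_def by (intro add_right_mono \<eta>.square_norm_integral_le)
    also have "\<dots> = (\<integral>\<^sup>+h. ennreal ((norm h)\<^sup>2 + f y) \<partial>\<eta> y t)"
      using f(2) sets_\<eta> by (simp add: nn_integral_add \<eta>.emeasure_space_1 cong: measurable_cong_sets)
    finally show ?thesis .
  qed
  then have "(\<integral>\<^sup>+y. ennreal ((norm (barycenter t y))\<^sup>2 + f y) \<partial>\<nu>)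
      \<le> (\<integral>\<^sup>+y. (\<integral>\<^sup>+h. ennreal ((norm h)\<^sup>2 + f y) \<partial>\<eta> y t) \<partial>\<nu>)"
    by (intro nn_integral_mono)
  also have "\<dots> = (\<integral>\<^sup>+p. ennreal ((norm (fst p))\<^sup>2 + f (snd p)) \<partial>P t)"
    using f(1) by (simp add: nn_integral_P[OF t])
  finally show ?thesis .
qed

lemma control_energy_barycenter_le: "control_energy T \<nu> barycenter \<le> relaxed_energy T P"
  unfolding control_energy_def relaxed_energy_def
  using nn_integral_barycenter_le[where f="\<lambda>_. 0"]
  by (intro nn_integral_mono) (simp split: split_indicator)

lemma moment_barycenter_le:
  "(\<integral>\<^sup>+ t\<in>K. (\<integral>\<^sup>+ y. ennreal ((norm (barycenter t y))\<^sup>2 + (norm y)\<^sup>2) \<partial>\<nu>) \<partial>lborel)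
    \<le> (\<integral>\<^sup>+ t\<in>K. (\<integral>\<^sup>+ p. ennreal ((norm (fst p))\<^sup>2 + (norm (snd p))\<^sup>2) \<partial>P t) \<partial>lborel)"
  using nn_integral_barycenter_le[where f="\<lambda>y. (norm y)\<^sup>2"]
  by (intro nn_integral_mono) (simp split: split_indicator)

lemma integrable_drift_P:
  assumes s: "s \<in> K" and fin: "(\<integral>\<^sup>+p. ennreal ((norm (fst p))\<^sup>2) \<partial>P s) < \<infinity>"
  shows "integrable (P s) (\<lambda>p. drift s (snd p) (fst p))"
proof -
  interpret P: prob_space "P s" by (rule prob_P[OF s])
  have meas: "f \<in> borel_measurable (P s)" if "f \<in> borel_measurable (borel \<Otimes>\<^sub>M borel)" for f :: "_ \<Rightarrow> 'z::topological_space"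
    using that sets_P[OF s] by (simp cong: measurable_cong_sets)
  have "integrable (P s) fst"
    by (rule P.integrable_if_square_integrable[OF meas fin]) simp
  then have "integrable (P s) (\<lambda>p. norm (Bbar s) + \<bar>c\<bar> * norm (fst p))"
    by (intro Bochner_Integration.integrable_add integrable_mult_right integrable_norm) simp_all
  then show ?thesis
  proof (rule Bochner_Integration.integrable_bound)
    show "(\<lambda>p. drift s (snd p) (fst p)) \<in> borel_measurable (P s)"
      by (rule meas[OF measurable_drift_pair])
    show "AE p in P s. norm (drift s (snd p) (fst p)) \<le> norm (norm (Bbar s) + \<bar>c\<bar> * norm (fst p))"
      by (intro AE_I2 order_trans[OF norm_drift_le]) simp
  qed
qed

lemma integral_drift_kernel:
  assumes fin: "(\<integral>\<^sup>+h. ennreal ((norm h)\<^sup>2) \<partial>\<eta> y s) < \<infinity>"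
  shows "(LINT h|\<eta> y s. drift s y h) = drift s y (barycenter s y)"
proof -
  interpret \<eta>: prob_space "\<eta> y s" by (rule prob_\<eta>)
  have int: "integrable (\<eta> y s) (\<lambda>h. h)"
    using sets_\<eta> by (intro \<eta>.integrable_if_square_integrable fin) (simp cong: measurable_cong_sets)
  have lin: "bounded_linear (\<lambda>h::(real^'d1) \<times> (real^'d2). \<Sigma> s y *v fst h)"
    using matrix_vector_mul_linear[of "\<Sigma> s y"]
    by (intro bounded_linear_compose[OF _ bounded_linear_fst]) (simp add: linear_conv_bounded_linear)
  have "(LINT h|\<eta> y s. drift s y h) = (LINT h|\<eta> y s. Bbar s) + (LINT h|\<eta> y s. \<Sigma> s y *v fst h)"
    unfolding drift_def
    by (intro Bochner_Integration.integral_add integrable_bounded_linear[OF lin int]) simp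
  also have "\<dots> = drift s y (barycenter s y)"
    unfolding drift_def barycenter_def integral_bounded_linear[OF lin int] by (simp add: \<eta>.prob_space)
  finally show ?thesis .
qed

lemma integral_drift_P:
  assumes s: "s \<in> K" and fin: "(\<integral>\<^sup>+p. ennreal ((norm (fst p))\<^sup>2) \<partial>P s) < \<infinity>"
  shows "(LINT p|P s. drift s (snd p) (fst p)) = (LINT y|\<nu>. drift s y (barycenter s y))"
proof -
  have "(LINT p|P s. drift s (snd p) (fst p)) = (LINT y|\<nu>. (LINT h|\<eta> y s. drift s y h))"
    using integrable_drift_P[OF assms] unfolding P_eq_kernel_product[OF s]
    by (subst integral_kernel_product[OF measurable_\<eta>_section[OF s] sets_\<nu> measurable_drift_pair]) simp_all
  also have "\<dots> = (LINT y|\<nu>. drift s y (barycenter s y))"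
  proof (rule integral_cong_AE)
    have "(\<integral>\<^sup>+y. (\<integral>\<^sup>+h. ennreal ((norm h)\<^sup>2) \<partial>\<eta> y s) \<partial>\<nu>) < \<infinity>"
      using fin by (simp add: nn_integral_P[OF s])
    then have "AE y in \<nu>. (\<integral>\<^sup>+h. ennreal ((norm h)\<^sup>2) \<partial>\<eta> y s) \<noteq> \<infinity>"
      by (intro nn_integral_PInf_AE)
         (simp_all add: measurable_compose[OF measurable_\<eta>_section[OF s] nn_integral_measurable_subprob_algebra])
    then show "AE y in \<nu>. (LINT h|\<eta> y s. drift s y h) = drift s y (barycenter s y)"
      by (rule AE_mp) (simp add: integral_drift_kernel less_top)
    show "(\<lambda>y. LINT h|\<eta> y s. drift s y h) \<in> borel_measurable \<nu>"
      using measurable_integral_kernel[OF measurable_\<eta>_section[OF s] sets_\<nu> measurable_drift_pair]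
      by simp
    have "(\<lambda>y. barycenter s y) \<in> borel_measurable \<nu>"
      using measurable_section_restrict[OF measurable_barycenter s] sets_\<nu>
      by (simp cong: measurable_cong_sets)
    then show "(\<lambda>y. drift s y (barycenter s y)) \<in> borel_measurable \<nu>"
      using sets_\<nu> by (intro measurable_drift) (simp_all cong: measurable_cong_sets)
  qed
  finally show ?thesis .
qed

lemma measurable_P_subprob: "P \<in> measurable (restrict_space borel K) (subprob_algebra (borel \<Otimes>\<^sub>M borel))"
  by (rule measurable_subprob_algebra)
     (auto simp: space_restrict_space prob_P sets_P measurable_P prob_space_imp_subprob_space)

lemma measurable_integral_drift_P:
  "(\<lambda>s. LINT p|P s. drift s (snd p) (fst p)) \<in> borel_measurable (restrict_space borel K)"
proof -
  let ?M = "restrict_space borel K \<Otimes>\<^sub>M ((borel :: ((real^'d1) \<times> (real^'d2)) measure) \<Otimes>\<^sub>M (borel :: (real^'m) measure))"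
  have time: "fst \<in> measurable ?M borel"
    by (intro measurable_compose[OF measurable_fst] measurable_restrict_space1) simp
  have F: "(\<lambda>q. drift (fst q) (snd (snd q)) (fst (snd q))) \<in> borel_measurable ?M"
    using time by (intro measurable_drift) simp_all
  have "(\<lambda>(s, p). (s, p)) \<in> measurable ?M ?M"
    by (simp add: case_prod_beta')
  from measurable_distr2[OF this measurable_P_subprob]
  have "(\<lambda>s. distr (P s) ?M (Pair s)) \<in> measurable (restrict_space borel K) (subprob_algebra ?M)"
    by simp
  from measurable_compose[OF this integral_measurable_subprob_algebra[OF F]]
  have "(\<lambda>s. LINT q|distr (P s) ?M (Pair s). drift (fst q) (snd (snd q)) (fst (snd q)))
      \<in> borel_measurable (restrict_space borel K)" .
  moreover have "(LINT q|distr (P s) ?M (Pair s). drift (fst q) (snd (snd q)) (fst (snd q)))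
      = (LINT p|P s. drift s (snd p) (fst p))" if s: "s \<in> K" for s
  proof -
    have "Pair s \<in> measurable (borel \<Otimes>\<^sub>M borel) ?M"
      using s by (intro measurable_Pair1') (simp add: space_restrict_space)
    then have "Pair s \<in> measurable (P s) ?M"
      using sets_P[OF s] by (simp cong: measurable_cong_sets)
    from integral_distr[OF this F] show ?thesis by simp
  qed
  ultimately show ?thesis
    by (rule measurable_cong[THEN iffD1, rotated]) (simp add: space_restrict_space)
qed

lemma measurable_integral_drift_barycenter:
  "(\<lambda>s. LINT y|\<nu>. drift s y (barycenter s y)) \<in> borel_measurable (restrict_space borel K)"
proof -
  have "(\<lambda>q. drift (fst q) (snd q) (barycenter (fst q) (snd q))) \<in> borel_measurable (restrict_space borel K \<Otimes>\<^sub>M \<nu>)"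
  proof (intro measurable_drift)
    show "fst \<in> borel_measurable (restrict_space borel K \<Otimes>\<^sub>M \<nu>)"
      by (intro measurable_compose[OF measurable_fst] measurable_restrict_space1) simp
    show "(\<lambda>q. barycenter (fst q) (snd q)) \<in> borel_measurable (restrict_space borel K \<Otimes>\<^sub>M \<nu>)"
      using measurable_barycenter sets_\<nu> by (simp add: case_prod_beta' cong: measurable_cong_sets)
  qed (use sets_\<nu> in \<open>simp cong: measurable_cong_sets\<close>)
  then show ?thesis
    by (intro sigma_finite_measure.borel_measurable_lebesgue_integral[OF prob_space_imp_sigma_finite[OF prob_\<nu>]])
       (simp add: case_prod_beta')
qed

lemma AE_energy_finite: "AE s in lborel. s \<in> K \<longrightarrow> (\<integral>\<^sup>+p. ennreal ((norm (fst p))\<^sup>2) \<partial>P s) < \<infinity>"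
proof -
  define G where "G s = (\<integral>\<^sup>+p. ennreal ((norm (fst p))\<^sup>2) \<partial>P s) * indicator K s" for s
  have "(\<lambda>s. \<integral>\<^sup>+p. ennreal ((norm (fst p))\<^sup>2) \<partial>P s) \<in> borel_measurable (restrict_space borel K)"
    by (rule measurable_compose[OF measurable_P_subprob nn_integral_measurable_subprob_algebra]) simp
  then have "G \<in> borel_measurable lborel"
    unfolding G_def by (subst borel_measurable_restrict_space_iff_ennreal[symmetric]) simp_all
  moreover have "(\<integral>\<^sup>+s. G s \<partial>lborel) < \<infinity>"
  proof -
    have "(\<integral>\<^sup>+s. G s \<partial>lborel)
        \<le> (\<integral>\<^sup>+ t\<in>K. (\<integral>\<^sup>+ p. ennreal ((norm (fst p))\<^sup>2 + (norm (snd p))\<^sup>2) \<partial>P t) \<partial>lborel)"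
      unfolding G_def by (intro nn_integral_mono mult_right_mono) (simp_all add: nn_integral_mono)
    then show ?thesis
      using moment_P by (rule le_less_trans)
  qed
  ultimately have "AE s in lborel. G s \<noteq> \<infinity>"
    by (intro nn_integral_PInf_AE) simp_all
  then show ?thesis
    by eventually_elim (auto simp: G_def less_top)
qed

lemma integral_Phi_barycenter:
  assumes t: "t \<in> K"
  shows "(LINT s:{0..t}|lborel. (LINT p|P s. Phi b \<sigma> \<nu> (\<phi> s) (return borel (Xbar s)) (snd p) \<nu> (fst p)))
    = (LINT s:{0..t}|lborel. (LINT y|\<nu>. Phi b \<sigma> \<nu> (\<phi> s) (return borel (Xbar s)) y \<nu> (barycenter s y)))"
proof -
  have sub: "{0..t} \<subseteq> K" using t by auto
  have "(LINT s:{0..t}|lborel. (LINT p|P s. Phi b \<sigma> \<nu> (\<phi> s) (return borel (Xbar s)) (snd p) \<nu> (fst p)))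
      = (LINT s:{0..t}|lborel. (LINT p|P s. drift s (snd p) (fst p)))"
    using sub by (intro set_lebesgue_integral_cong) (auto simp: Phi_eq_drift)
  also have "\<dots> = (LINT s:{0..t}|lborel. (LINT y|\<nu>. drift s y (barycenter s y)))"
    using sub AE_energy_finite
    by (intro set_integral_cong_AE_restrict[where K=K] measurable_integral_drift_P measurable_integral_drift_barycenter)
       (auto elim!: eventually_mono simp: integral_drift_P)
  also have "\<dots> = (LINT s:{0..t}|lborel. (LINT y|\<nu>. Phi b \<sigma> \<nu> (\<phi> s) (return borel (Xbar s)) y \<nu> (barycenter s y)))"
    using sub by (intro set_lebesgue_integral_cong) (auto simp: Phi_eq_drift)
  finally show ?thesis .
qed

lemma barycenter_in_Xi_tilde:
  assumes ode: "\<forall>t\<in>K. \<phi> t = x + (LINT s:{0..t}|lborel.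
      (LINT p|P s. Phi b \<sigma> \<nu> (\<phi> s) (return borel (Xbar s)) (snd p) \<nu> (fst p)))"
  shows "barycenter \<in> Xi_tilde b \<sigma> \<nu> x Xbar T \<phi>"
  unfolding Xi_tilde_def
  using measurable_barycenter le_less_trans[OF moment_barycenter_le moment_P] ode integral_Phi_barycenter
  by simp

end

context rate_function_setting
begin

lemma Xi_tilde_of_Xi:
  fixes P :: "real \<Rightarrow> (((real^'d1) \<times> (real^'d2)) \<times> (real^'m)) measure"
  assumes "P \<in> Xi b \<sigma> \<nu> x Xbar T \<phi>"
  shows "\<exists>z \<in> (Xi_tilde b \<sigma> \<nu> x Xbar T \<phi> :: (real \<Rightarrow> real^'m \<Rightarrow> (real^'d1) \<times> (real^'d2)) set).
    control_energy T \<nu> z \<le> relaxed_energy T P"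
proof -
  note P = assms[unfolded Xi_def, THEN CollectD]
  from P obtain \<eta> where kernel: "stochastic_kernel T \<eta>"
    and disintegration: "\<forall>t\<in>K. \<forall>A1\<in>sets borel. \<forall>A2\<in>sets borel.
      emeasure (P t) (A1 \<times> A2) = (\<integral>\<^sup>+ y\<in>A2. emeasure (\<eta> y t) A1 \<partial>\<nu>)"
    by blast
  interpret relaxed_control T b \<sigma> \<nu> Xbar \<phi> c P \<eta>
  proof (intro relaxed_control.intro rate_function_setting_axioms relaxed_control_axioms.intro)
    show "\<And>t. t \<in> K \<Longrightarrow> prob_space (P t)" "\<And>t. t \<in> K \<Longrightarrow> sets (P t) = sets (borel \<Otimes>\<^sub>M borel)"
      using P by simp_all
    show "\<And>A. A \<in> sets (borel \<Otimes>\<^sub>M borel) \<Longrightarrow> (\<lambda>t. emeasure (P t) A) \<in> borel_measurable (restrict_space borel K)"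
      using P by simp
    show "(\<integral>\<^sup>+ t\<in>K. (\<integral>\<^sup>+ p. ennreal ((norm (fst p))\<^sup>2 + (norm (snd p))\<^sup>2) \<partial>P t) \<partial>lborel) < \<infinity>"
      using P by simp
  qed (use kernel disintegration in simp_all)
  have "barycenter \<in> Xi_tilde b \<sigma> \<nu> x Xbar T \<phi>"
    by (rule barycenter_in_Xi_tilde) (use P in simp)
  with control_energy_barycenter_le show ?thesis
    by blast
qed

lemma I_rate_eq_I_tilde:
  "I_rate TYPE('d2::finite) b \<sigma> \<nu> x Xbar T \<phi> = I_tilde TYPE('d2) b \<sigma> \<nu> x Xbar T \<phi>"
  unfolding I_rate_eq_INF I_tilde_eq_INF
proof (rule antisym)
  show "(INF P \<in> (Xi b \<sigma> \<nu> x Xbar T \<phi> :: (real \<Rightarrow> (((real^'d1) \<times> (real^'d2)) \<times> (real^'m)) measure) set).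
          ennreal (1/2) * relaxed_energy T P)
      \<le> (INF z \<in> (Xi_tilde b \<sigma> \<nu> x Xbar T \<phi> :: (real \<Rightarrow> real^'m \<Rightarrow> (real^'d1) \<times> (real^'d2)) set).
          ennreal (1/2) * control_energy T \<nu> z)"
  proof (rule INF_mono)
    fix z :: "real \<Rightarrow> real^'m \<Rightarrow> (real^'d1) \<times> (real^'d2)"
    assume z: "z \<in> Xi_tilde b \<sigma> \<nu> x Xbar T \<phi>"
    then have measurable_z: "(\<lambda>(t, y). z t y) \<in> borel_measurable (restrict_space borel K \<Otimes>\<^sub>M borel)"
      by (simp add: Xi_tilde_def)
    have "lifted_control z \<in> Xi b \<sigma> \<nu> x Xbar T \<phi>"
      by (rule lifted_control_in_Xi[OF measurable_z z])
    moreover have "ennreal (1/2) * relaxed_energy T (lifted_control z) \<le> ennreal (1/2) * control_energy T \<nu> z"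
      by (simp add: relaxed_energy_lifted_control[OF measurable_z])
    ultimately show "\<exists>P \<in> (Xi b \<sigma> \<nu> x Xbar T \<phi> :: (real \<Rightarrow> (((real^'d1) \<times> (real^'d2)) \<times> (real^'m)) measure) set).
        ennreal (1/2) * relaxed_energy T P \<le> ennreal (1/2) * control_energy T \<nu> z"
      by blast
  qed
  show "(INF z \<in> (Xi_tilde b \<sigma> \<nu> x Xbar T \<phi> :: (real \<Rightarrow> real^'m \<Rightarrow> (real^'d1) \<times> (real^'d2)) set).
          ennreal (1/2) * control_energy T \<nu> z)
      \<le> (INF P \<in> (Xi b \<sigma> \<nu> x Xbar T \<phi> :: (real \<Rightarrow> (((real^'d1) \<times> (real^'d2)) \<times> (real^'m)) measure) set).
          ennreal (1/2) * relaxed_energy T P)"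
  proof (rule INF_mono)
    fix P :: "real \<Rightarrow> (((real^'d1) \<times> (real^'d2)) \<times> (real^'m)) measure"
    assume "P \<in> Xi b \<sigma> \<nu> x Xbar T \<phi>"
    from Xi_tilde_of_Xi[OF this] obtain z :: "real \<Rightarrow> real^'m \<Rightarrow> (real^'d1) \<times> (real^'d2)"
      where z: "z \<in> Xi_tilde b \<sigma> \<nu> x Xbar T \<phi>" and le: "control_energy T \<nu> z \<le> relaxed_energy T P"
      by blast
    from le have "ennreal (1/2) * control_energy T \<nu> z \<le> ennreal (1/2) * relaxed_energy T P"
      by (rule mult_left_mono) simp
    with z show "\<exists>z \<in> (Xi_tilde b \<sigma> \<nu> x Xbar T \<phi> :: (real \<Rightarrow> real^'m \<Rightarrow> (real^'d1) \<times> (real^'d2)) set).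
        ennreal (1/2) * control_energy T \<nu> z \<le> ennreal (1/2) * relaxed_energy T P"
      by blast
  qed
qed

end

lemma rate_function_setting_if_Lipschitz:
  fixes b :: "real^'n \<Rightarrow> (real^'n) measure \<Rightarrow> real^'m \<Rightarrow> (real^'m) measure \<Rightarrow> real^'n"
    and \<sigma> :: "real^'n \<Rightarrow> (real^'n) measure \<Rightarrow> real^'m \<Rightarrow> (real^'m) measure \<Rightarrow> real^'d1^'n"
  assumes T: "0 < T" and \<nu>: "P2 \<nu>" and C: "0 \<le> C" and c2: "0 \<le> c2"
    and lip: "\<And>x1 x2 \<mu>1 \<mu>2 y1 y2. P2 \<mu>1 \<Longrightarrow> P2 \<mu>2 \<Longrightarrow>
      norm (b x1 \<mu>1 y1 \<nu> - b x2 \<mu>2 y2 \<nu>) + norm (\<sigma> x1 \<mu>1 y1 \<nu> - \<sigma> x2 \<mu>2 y2 \<nu>)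
        \<le> C * (norm (x1 - x2) + norm (y1 - y2) + W2 \<mu>1 \<mu>2 + W2 \<nu> \<nu>)"
    and \<sigma>_upper: "\<And>x \<mu> y \<xi>. P2 \<mu> \<Longrightarrow> ((\<sigma> x \<mu> y \<nu> ** transpose (\<sigma> x \<mu> y \<nu>)) *v \<xi>) \<bullet> \<xi> \<le> c2 * (norm \<xi>)\<^sup>2"
    and Xbar: "continuous_on {0..T} Xbar" and \<phi>: "continuous_on {0..T} \<phi>"
  shows "rate_function_setting T b \<sigma> \<nu> Xbar \<phi> (sqrt c2)"
proof (rule rate_function_setting.intro)
  show "prob_space \<nu>" "sets \<nu> = sets borel"
    using \<nu> by (simp_all add: P2_def)
  show "continuous_on ({0..T} \<times> UNIV) (\<lambda>q. b (\<phi> (fst q)) (return borel (Xbar (fst q))) (snd q) \<nu>)"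
  proof (rule continuous_on_Dirac_coefficient[OF Dirac_Lipschitz_if_W2_Lipschitz[OF _ \<nu> C] C \<phi> Xbar])
    fix x1 x2 :: "real^'n" and \<mu>1 \<mu>2 :: "(real^'n) measure" and y1 y2 :: "real^'m"
    assume "P2 \<mu>1" "P2 \<mu>2"
    from lip[OF this, of x1 y1 x2 y2] show "norm (b x1 \<mu>1 y1 \<nu> - b x2 \<mu>2 y2 \<nu>)
        \<le> C * (norm (x1 - x2) + norm (y1 - y2) + W2 \<mu>1 \<mu>2 + W2 \<nu> \<nu>)"
      using norm_ge_zero[of "\<sigma> x1 \<mu>1 y1 \<nu> - \<sigma> x2 \<mu>2 y2 \<nu>"] by linarith
  qed
  show "continuous_on ({0..T} \<times> UNIV) (\<lambda>q. \<sigma> (\<phi> (fst q)) (return borel (Xbar (fst q))) (snd q) \<nu>)"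
  proof (rule continuous_on_Dirac_coefficient[OF Dirac_Lipschitz_if_W2_Lipschitz[OF _ \<nu> C] C \<phi> Xbar])
    fix x1 x2 :: "real^'n" and \<mu>1 \<mu>2 :: "(real^'n) measure" and y1 y2 :: "real^'m"
    assume "P2 \<mu>1" "P2 \<mu>2"
    from lip[OF this, of x1 y1 x2 y2] show "norm (\<sigma> x1 \<mu>1 y1 \<nu> - \<sigma> x2 \<mu>2 y2 \<nu>)
        \<le> C * (norm (x1 - x2) + norm (y1 - y2) + W2 \<mu>1 \<mu>2 + W2 \<nu> \<nu>)"
      using norm_ge_zero[of "b x1 \<mu>1 y1 \<nu> - b x2 \<mu>2 y2 \<nu>"] by linarith
  qed
  show "norm (\<sigma> (\<phi> s) (return borel (Xbar s)) y \<nu> *v v) \<le> sqrt c2 * norm v" for s y v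
    by (rule norm_matrix_vector_mult_le[OF \<sigma>_upper[OF P2_return] c2])
qed (rule T)

theorem lemma5p9:
  fixes T :: real and x :: "real^'n"
    and b :: "real^'n \<Rightarrow> (real^'n) measure \<Rightarrow> real^'m \<Rightarrow> (real^'m) measure \<Rightarrow> real^'n"
    and \<sigma> :: "real^'n \<Rightarrow> (real^'n) measure \<Rightarrow> real^'m \<Rightarrow> (real^'m) measure \<Rightarrow> real^'d1^'n"
    and f :: "real^'m \<Rightarrow> real^'m" and g :: "real^'m \<Rightarrow> real^'d2^'m"
    and \<nu> :: "(real^'m) measure" and Xbar :: "real \<Rightarrow> real^'n"
    and \<phi> :: "real \<Rightarrow> real^'n"
  assumes T: "T > 0"
    and A1_b\<sigma>: "\<exists>C>0. \<forall>x1 x2 \<mu>1 \<mu>2 y1 y2 \<nu>1 \<nu>2. P2 \<mu>1 \<longrightarrow> P2 \<mu>2 \<longrightarrow> P2 \<nu>1 \<longrightarrow> P2 \<nu>2 \<longrightarrow>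
        norm (b x1 \<mu>1 y1 \<nu>1 - b x2 \<mu>2 y2 \<nu>2) + norm (\<sigma> x1 \<mu>1 y1 \<nu>1 - \<sigma> x2 \<mu>2 y2 \<nu>2)
          \<le> C * (norm (x1 - x2) + norm (y1 - y2) + W2 \<mu>1 \<mu>2 + W2 \<nu>1 \<nu>2)"
    and A1_fg: "\<exists>C>0. \<forall>y1 y2. norm (f y1 - f y2) + norm (g y1 - g y2) \<le> C * norm (y1 - y2)"
    and A1_diss: "\<exists>\<kappa>>0. \<forall>y1 y2. 2 * ((f y1 - f y2) \<bullet> (y1 - y2)) + 3 * (norm (g y1 - g y2))\<^sup>2
        \<le> - \<kappa> * (norm (y1 - y2))\<^sup>2"
    and A2_g: "bounded (range g)"
    and A2_\<sigma>: "\<exists>c1>0. \<exists>c2>0. \<forall>x \<mu> y \<nu>' \<xi>. P2 \<mu> \<longrightarrow> P2 \<nu>' \<longrightarrow>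
        c1 * (norm \<xi>)\<^sup>2 \<le> ((\<sigma> x \<mu> y \<nu>' ** transpose (\<sigma> x \<mu> y \<nu>')) *v \<xi>) \<bullet> \<xi> \<and>
        ((\<sigma> x \<mu> y \<nu>' ** transpose (\<sigma> x \<mu> y \<nu>')) *v \<xi>) \<bullet> \<xi> \<le> c2 * (norm \<xi>)\<^sup>2"
    and nu_inv: "invariant_measure f g \<nu>"
    and nu_unique: "\<forall>\<nu>'. invariant_measure f g \<nu>' \<longrightarrow> \<nu>' = \<nu>"
    and Xbar0: "Xbar 0 = x"
    and Xbar_ode: "\<forall>t\<in>{0..T}. (Xbar has_vector_derivative
        bbar b \<nu> (Xbar t) (return borel (Xbar t))) (at t within {0..T})"
    and \<phi>_cont: "continuous_on {0..T} \<phi>"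
  shows "I_rate TYPE('d2) b \<sigma> \<nu> x Xbar T \<phi> = I_tilde TYPE('d2) b \<sigma> \<nu> x Xbar T \<phi>"
proof (cases "P2 \<nu>")
  case False
  have "prob_space \<nu>" "sets \<nu> = sets borel"
    using nu_inv by (simp_all add: invariant_measure_def)
  with False have "(Xi b \<sigma> \<nu> x Xbar T \<phi> :: (real \<Rightarrow> (((real^'d1) \<times> (real^'d2)) \<times> (real^'m)) measure) set) = {}"
    and "(Xi_tilde b \<sigma> \<nu> x Xbar T \<phi> :: (real \<Rightarrow> real^'m \<Rightarrow> (real^'d1) \<times> (real^'d2)) set) = {}"
    using P2_if_Xi_nonempty[OF _ _ T] P2_if_Xi_tilde_nonempty[OF _ _ T] by blast+
  then show ?thesis
    by (simp add: I_rate_eq_INF I_tilde_eq_INF)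
next
  case True
  from A1_b\<sigma> obtain C where C: "C > 0" and lip: "\<forall>x1 x2 \<mu>1 \<mu>2 y1 y2 \<nu>1 \<nu>2. P2 \<mu>1 \<longrightarrow> P2 \<mu>2 \<longrightarrow> P2 \<nu>1 \<longrightarrow> P2 \<nu>2 \<longrightarrow>
      norm (b x1 \<mu>1 y1 \<nu>1 - b x2 \<mu>2 y2 \<nu>2) + norm (\<sigma> x1 \<mu>1 y1 \<nu>1 - \<sigma> x2 \<mu>2 y2 \<nu>2)
        \<le> C * (norm (x1 - x2) + norm (y1 - y2) + W2 \<mu>1 \<mu>2 + W2 \<nu>1 \<nu>2)"
    by blast
  from A2_\<sigma> obtain c2 where c2: "c2 > 0" and \<sigma>_upper: "\<forall>x \<mu> y \<nu>' \<xi>. P2 \<mu> \<longrightarrow> P2 \<nu>' \<longrightarrow>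
      ((\<sigma> x \<mu> y \<nu>' ** transpose (\<sigma> x \<mu> y \<nu>')) *v \<xi>) \<bullet> \<xi> \<le> c2 * (norm \<xi>)\<^sup>2"
    by blast
  have "continuous_on {0..T} Xbar"
    using Xbar_ode by (metis continuous_on_eq_continuous_within has_vector_derivative_continuous)
  then interpret rate_function_setting T b \<sigma> \<nu> Xbar \<phi> "sqrt c2"
    using C c2 lip \<sigma>_upper True
    by (intro rate_function_setting_if_Lipschitz[where C = C, OF T True _ _ _ _ _ \<phi>_cont]) auto
  show ?thesis
    by (rule I_rate_eq_I_tilde)
qed

end
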